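(* Let $X$ be a real Banach space and $f:X\to\mathbb{R}\cup\{+\infty\}$ proper, convex and lsc. Assume $\mathrm{int}(\mathrm{dom}\, f)\neq\varnothing$, $\mathrm{dom}(Df^* )\neq\varnothing$, and $F_{\partial f}(x,x^* )=f(x)+f^*(x^* )$ for all $(x,x^* )\in\mathrm{dom}\, f\times\mathrm{dom}\, f^*$. Let $\mathcal{Z}=\mathrm{Im}(Df^* )$, $K=\overline{\mathrm{conv}}(\mathcal{Z})$, $\mathcal{V}=\overline{\mathrm{conv}}^{w^*}\big(\bigcup_{x\in\mathrm{int}(\mathrm{dom}\, f)}\partial f(x)\big)$ and $\widehat{N}=\bigcup_{\widehat{x}\in K}N_{\mathrm{dom}\, f}(\widehat{x})$. Then \[ \mathrm{dom}(Df^* )\subseteq\partial f(K) = \mathcal{V}+\widehat{N}\subseteq\mathrm{dom}\, f^*, \] where $\partial f(K)=\bigcup_{\widehat{x}\in K}\partial f(\widehat{x})$.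
   Context: $f^*$ is the Fenchel conjugate; $\mathrm{dom}(Df^* )$ is the set of points of $X^*$ at which $f^*$ is Fréchet differentiable, where $Df^*(v^* )\in X$; $\mathrm{Im}(Df^* )$ is the set of these derivatives. $\overline{\mathrm{conv}}$ and $\overline{\mathrm{conv}}^{w^*}$ are the closed and weak$^*$-closed convex hulls. $N_{\mathrm{dom}\, f}(\widehat{x})$ is the normal cone to $\mathrm{dom}\, f$ at $\widehat{x}$. $F_{\partial f}(x,x^* )=\sup_{(y,y^* )\in\mathrm{Gr}(\partial f)}\{\langle y,x^*\rangle+\langle x,y^*\rangle-\langle y,y^*\rangle\}$. *)

theory Defs
  imports "HOL-Analysis.Analysis"
begin

definition edom :: "('a \<Rightarrow> ereal) \<Rightarrow> 'a set" where
  "edom f = {x. f x < \<infinity>}"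

definition proper_fun :: "('a \<Rightarrow> ereal) \<Rightarrow> bool" where
  "proper_fun f \<longleftrightarrow> (\<forall>x. f x \<noteq> -\<infinity>) \<and> (\<exists>x. f x \<noteq> \<infinity>)"

definition epigraph_e :: "('a \<Rightarrow> ereal) \<Rightarrow> ('a \<times> real) set" where
  "epigraph_e f = {(x, r). f x \<le> ereal r}"

definition convex_fun :: "('a::real_vector \<Rightarrow> ereal) \<Rightarrow> bool" where
  "convex_fun f \<longleftrightarrow> convex (epigraph_e f)"

definition lsc_fun :: "('a::topological_space \<Rightarrow> ereal) \<Rightarrow> bool" where
  "lsc_fun f \<longleftrightarrow> closed (epigraph_e f)"

definition fconj :: "('a::real_normed_vector \<Rightarrow> ereal) \<Rightarrow> ('a \<Rightarrow>\<^sub>L real) \<Rightarrow> ereal" where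
  "fconj f v = (SUP x. ereal (blinfun_apply v x) - f x)"

definition subdiff :: "('a::real_normed_vector \<Rightarrow> ereal) \<Rightarrow> 'a \<Rightarrow> ('a \<Rightarrow>\<^sub>L real) set" where
  "subdiff f x = {v. f x \<noteq> \<infinity> \<and> f x \<noteq> -\<infinity> \<and>
      (\<forall>y. f y \<ge> f x + ereal (blinfun_apply v (y - x)))}"

definition subdiff_graph :: "('a::real_normed_vector \<Rightarrow> ereal) \<Rightarrow> ('a \<times> ('a \<Rightarrow>\<^sub>L real)) set" where
  "subdiff_graph f = {(x, v). v \<in> subdiff f x}"

definition fitzpatrick_subdiff :: "('a::real_normed_vector \<Rightarrow> ereal) \<Rightarrow> 'a \<Rightarrow> ('a \<Rightarrow>\<^sub>L real) \<Rightarrow> ereal" where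
  "fitzpatrick_subdiff f x v = (SUP p \<in> subdiff_graph f.
      ereal (blinfun_apply v (fst p) + blinfun_apply (snd p) x - blinfun_apply (snd p) (fst p)))"

text \<open>Fr\'echet derivative of f* at v is the point x \<in> X: f* is finite near v and
  its (real) Fr\'echet derivative at v is the functional h \<mapsto> h(x).\<close>
definition conj_frechet_deriv :: "('a::real_normed_vector \<Rightarrow> ereal) \<Rightarrow> ('a \<Rightarrow>\<^sub>L real) \<Rightarrow> 'a \<Rightarrow> bool" where
  "conj_frechet_deriv f v x \<longleftrightarrow>
     (\<forall>\<^sub>F w in nhds v. fconj f w \<noteq> \<infinity> \<and> fconj f w \<noteq> -\<infinity>) \<and>
     ((\<lambda>w. real_of_ereal (fconj f w)) has_derivative (\<lambda>h. blinfun_apply h x)) (at v)"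

definition dom_Dconj :: "('a::real_normed_vector \<Rightarrow> ereal) \<Rightarrow> ('a \<Rightarrow>\<^sub>L real) set" where
  "dom_Dconj f = {v. \<exists>x. conj_frechet_deriv f v x}"

definition im_Dconj :: "('a::real_normed_vector \<Rightarrow> ereal) \<Rightarrow> 'a set" where
  "im_Dconj f = {x. \<exists>v. conj_frechet_deriv f v x}"

definition weak_star_topology :: "('a::real_normed_vector \<Rightarrow>\<^sub>L real) topology" where
  "weak_star_topology = topology_generated_by
     {{w. blinfun_apply w x \<in> U} | x U. open U}"

definition weak_star_closed_convex_hull :: "('a::real_normed_vector \<Rightarrow>\<^sub>L real) set \<Rightarrow> ('a \<Rightarrow>\<^sub>L real) set" where
  "weak_star_closed_convex_hull S =
     \<Inter>{C. convex C \<and> closedin weak_star_topology C \<and> S \<subseteq> C}"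

text \<open>Normal cone (empty at points outside C).\<close>
definition normal_cone :: "'a::real_normed_vector set \<Rightarrow> 'a \<Rightarrow> ('a \<Rightarrow>\<^sub>L real) set" where
  "normal_cone C x = {v. x \<in> C \<and> (\<forall>y\<in>C. blinfun_apply v (y - x) \<le> 0)}"

end

(*
  A subgradient w of f at an interior point x of dom f is also a subgradient at every
  z = Df*(u).  The Fitzpatrick equality at (x', u), for x' slightly beyond x on the ray from z,
  yields pairs (y_n, w_n) in the graph of the subdifferential that are nearly maximizing for
  f* at u, so y_n -> z by Smulian's lemma, and whose affine minorants are nearly exact at x'.
  Upper semicontinuity of f at x and lower semicontinuity at z then force f to be affine with
  slope w on the segment [z, x'].  As the points where w is a subgradient form a closed convex
  set, w is a subgradient on all of K; in particular V + N lies in the subdifferential on K.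

  Conversely, for v a subgradient at a point of K, the support function of the interior
  subgradients dominates v on the cone generated by int(dom f) minus that point, and a
  Hahn-Banach sandwich argument yields a functional a in between: a lies in V by weak-star
  separation, and v - a is normal to dom f.
*)
theory Submission
  imports Defs
begin

section \<open>Sublinear functionals and the Hahn--Banach theorem\<close>

definition sublinear :: "('a::real_vector \<Rightarrow> real) \<Rightarrow> bool" where
  "sublinear p \<longleftrightarrow> (\<forall>x y. p (x + y) \<le> p x + p y) \<and> (\<forall>c x. 0 \<le> c \<longrightarrow> p (c *\<^sub>R x) = c * p x)"

lemma sublinear_add: "sublinear p \<Longrightarrow> p (x + y) \<le> p x + p y"
  unfolding sublinear_def by blast

lemma sublinear_scaleR: "sublinear p \<Longrightarrow> 0 \<le> c \<Longrightarrow> p (c *\<^sub>R x) = c * p x"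
  unfolding sublinear_def by blast

lemma sublinear_zero: "sublinear p \<Longrightarrow> p 0 = 0"
  using sublinear_scaleR[of p 0 0] by simp

lemma sublinear_minus: "sublinear p \<Longrightarrow> - p (- x) \<le> p x"
  using sublinear_add[of p x "- x"] sublinear_zero[of p] by simp

lemma sublinearI:
  assumes add: "\<And>x y. p (x + y) \<le> p x + p y" and zero: "p 0 \<le> 0"
    and scale: "\<And>c x. 0 < c \<Longrightarrow> p (c *\<^sub>R x) \<le> c * p x"
  shows "sublinear p"
proof -
  have "p (c *\<^sub>R x) = c * p x" if "0 \<le> c" for c x
  proof (cases "c = 0")
    case True
    with add[of 0 0] zero show ?thesis by simp
  next
    case False
    with that have c: "0 < c" by simp
    have "p x = p (inverse c *\<^sub>R (c *\<^sub>R x))"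
      using c by simp
    also have "\<dots> \<le> inverse c * p (c *\<^sub>R x)"
      using scale[of "inverse c" "c *\<^sub>R x"] c by simp
    finally have "c * p x \<le> p (c *\<^sub>R x)"
      using c by (simp add: field_simps)
    with scale[OF c, of x] show ?thesis by simp
  qed
  with add show ?thesis
    unfolding sublinear_def by blast
qed

lemma le_INF_add_INF:
  fixes f g :: "_ \<Rightarrow> real"
  assumes "S \<noteq> {}" "T \<noteq> {}" and le: "\<And>s t. s \<in> S \<Longrightarrow> t \<in> T \<Longrightarrow> c \<le> f s + g t"
  shows "c \<le> (INF s\<in>S. f s) + (INF t\<in>T. g t)"
proof -
  have "c - g t \<le> (INF s\<in>S. f s)" if "t \<in> T" for t
    using assms(1) le that by (intro cINF_greatest) force+
  then have "c - (INF s\<in>S. f s) \<le> (INF t\<in>T. g t)"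
    using assms(2) by (intro cINF_greatest) force+
  then show ?thesis by simp
qed

text \<open>A sublinear minorant of \<open>p\<close> that is at most \<open>- p y\<close> at \<open>- y\<close>: a minimal sublinear
  functional coincides with it for every \<open>y\<close>, hence is odd and therefore linear.\<close>

definition sublinear_shift :: "('a::real_vector \<Rightarrow> real) \<Rightarrow> 'a \<Rightarrow> 'a \<Rightarrow> real" where
  "sublinear_shift p y d = (INF t\<in>{0..}. p (d + t *\<^sub>R y) - t * p y)"

lemma sublinear_shift_le:
  assumes p: "sublinear p" and t: "0 \<le> t"
  shows "sublinear_shift p y d \<le> p (d + t *\<^sub>R y) - t * p y"
  unfolding sublinear_shift_def
proof (rule cINF_lower)
  show "bdd_below ((\<lambda>t. p (d + t *\<^sub>R y) - t * p y) ` {0..})"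
  proof (rule bdd_belowI2)
    fix s :: real assume "s \<in> {0..}"
    then have "p (s *\<^sub>R y) \<le> p (d + s *\<^sub>R y) + p (- d)" and "p (s *\<^sub>R y) = s * p y"
      using sublinear_add[OF p, of "d + s *\<^sub>R y" "- d"] sublinear_scaleR[OF p] by simp_all
    then show "- p (- d) \<le> p (d + s *\<^sub>R y) - s * p y" by simp
  qed
qed (use t in simp)

lemma sublinear_shift_le_self: "sublinear p \<Longrightarrow> sublinear_shift p y d \<le> p d"
  using sublinear_shift_le[of p 0 y d] by simp

lemma sublinear_shift_minus: "sublinear p \<Longrightarrow> sublinear_shift p y (- y) \<le> - p y"
  using sublinear_shift_le[of p 1 y "- y"] sublinear_zero[of p] by simp

lemma sublinear_sublinear_shift:
  assumes p: "sublinear p"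
  shows "sublinear (sublinear_shift p y)"
proof (rule sublinearI)
  fix d1 d2
  have "sublinear_shift p y (d1 + d2)
      \<le> (p (d1 + s *\<^sub>R y) - s * p y) + (p (d2 + t *\<^sub>R y) - t * p y)"
    if "s \<in> {0..}" "t \<in> {0..}" for s t
  proof -
    have "(d1 + d2) + (s + t) *\<^sub>R y = (d1 + s *\<^sub>R y) + (d2 + t *\<^sub>R y)"
      by (simp add: algebra_simps)
    then have "sublinear_shift p y (d1 + d2) \<le> p ((d1 + s *\<^sub>R y) + (d2 + t *\<^sub>R y)) - (s + t) * p y"
      using sublinear_shift_le[OF p, of "s + t" y "d1 + d2"] that by (simp only:) simp
    with sublinear_add[OF p, of "d1 + s *\<^sub>R y" "d2 + t *\<^sub>R y"] show ?thesis
      by (simp add: algebra_simps)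
  qed
  then show "sublinear_shift p y (d1 + d2) \<le> sublinear_shift p y d1 + sublinear_shift p y d2"
    unfolding sublinear_shift_def[of p y d1] sublinear_shift_def[of p y d2]
    by (intro le_INF_add_INF) auto
next
  show "sublinear_shift p y 0 \<le> 0"
    using sublinear_shift_le_self[OF p, of y 0] sublinear_zero[OF p] by simp
next
  fix c :: real and d assume c: "0 < c"
  have "sublinear_shift p y (c *\<^sub>R d) / c \<le> p (d + t *\<^sub>R y) - t * p y" if "t \<in> {0..}" for t
  proof -
    have "c *\<^sub>R d + (c * t) *\<^sub>R y = c *\<^sub>R (d + t *\<^sub>R y)"
      by (simp add: scaleR_add_right)
    then have "sublinear_shift p y (c *\<^sub>R d) \<le> p (c *\<^sub>R (d + t *\<^sub>R y)) - (c * t) * p y"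
      using sublinear_shift_le[OF p, of "c * t" y "c *\<^sub>R d"] c that by simp
    then show ?thesis
      using sublinear_scaleR[OF p, of c "d + t *\<^sub>R y"] c by (simp add: field_simps)
  qed
  then have "sublinear_shift p y (c *\<^sub>R d) / c \<le> sublinear_shift p y d"
    unfolding sublinear_shift_def[of p y d] by (intro cINF_greatest) auto
  with c show "sublinear_shift p y (c *\<^sub>R d) \<le> c * sublinear_shift p y d"
    by (simp add: field_simps)
qed

lemma sublinear_INF_chain:
  assumes ne: "C \<noteq> {}" and sub: "\<And>q. q \<in> C \<Longrightarrow> sublinear q"
    and chain: "\<And>q1 q2. q1 \<in> C \<Longrightarrow> q2 \<in> C \<Longrightarrow> q1 \<le> q2 \<or> q2 \<le> q1"
    and bdd: "\<And>x. bdd_below ((\<lambda>q. q x) ` C)"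
  shows "sublinear (\<lambda>x. INF q\<in>C. q x)"
proof (rule sublinearI)
  fix x y
  have "(INF q\<in>C. q (x + y)) \<le> q1 x + q2 y" if q12: "q1 \<in> C" "q2 \<in> C" for q1 q2
  proof -
    obtain q where q: "q \<in> C" "q \<le> q1" "q \<le> q2"
      using chain[OF q12] q12 by auto
    have "(INF q\<in>C. q (x + y)) \<le> q x + q y"
      using cINF_lower[OF bdd q(1)] sublinear_add[OF sub[OF q(1)]] by (rule order_trans)
    with q(2,3) show ?thesis
      by (meson add_mono le_funD order_trans)
  qed
  then show "(INF q\<in>C. q (x + y)) \<le> (INF q\<in>C. q x) + (INF q\<in>C. q y)"
    using ne by (intro le_INF_add_INF) auto
next
  obtain q where "q \<in> C"
    using ne by blast
  then show "(INF q\<in>C. q 0) \<le> 0"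
    using cINF_lower[OF bdd, of q] sublinear_zero[OF sub] by metis
next
  fix c :: real and x assume c: "0 < c"
  have "(INF q\<in>C. q (c *\<^sub>R x)) / c \<le> q x" if "q \<in> C" for q
    using cINF_lower[OF bdd that, of "c *\<^sub>R x"] sublinear_scaleR[OF sub[OF that], of c x] c
    by (simp add: field_simps)
  then have "(INF q\<in>C. q (c *\<^sub>R x)) / c \<le> (INF q\<in>C. q x)"
    using ne by (intro cINF_greatest) auto
  with c show "(INF q\<in>C. q (c *\<^sub>R x)) \<le> c * (INF q\<in>C. q x)"
    by (simp add: field_simps)
qed

lemma exists_minimal_sublinear_below:
  assumes p: "sublinear p"
  obtains m where "sublinear m" "m \<le> p" "\<And>q. sublinear q \<Longrightarrow> q \<le> m \<Longrightarrow> q = m"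
proof -
  define A where "A = {q. sublinear q \<and> q \<le> p}"
  define P where "P = (\<lambda>q1 q2 :: 'a \<Rightarrow> real. q2 \<le> q1)"
  have "partial_order_on A (relation_of P A)"
    unfolding partial_order_on_def preorder_on_def refl_on_def trans_def antisym_def
      relation_of_def P_def
    by auto
  moreover have "\<exists>u\<in>A. \<forall>q\<in>C. P q u" if C: "C \<in> Chains (relation_of P A)" for C
  proof (cases "C = {}")
    case True
    with p show ?thesis by (auto simp: A_def)
  next
    case False
    have CA: "sublinear q" "q \<le> p" if "q \<in> C" for q
      using C that unfolding Chains_def relation_of_def A_def by auto
    have bdd: "bdd_below ((\<lambda>q. q x) ` C)" for x
    proof (rule bdd_belowI2)
      fix q assume "q \<in> C"
      then show "- p (- x) \<le> q x"
        using CA sublinear_minus[of q x] le_funD[of q p "- x"] by force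
    qed
    define u where "u x = (INF q\<in>C. q x)" for x
    have "sublinear u"
      unfolding u_def
    proof (rule sublinear_INF_chain[OF False CA(1) _ bdd])
      show "q1 \<le> q2 \<or> q2 \<le> q1" if "q1 \<in> C" "q2 \<in> C" for q1 q2
        using C that unfolding Chains_def relation_of_def P_def by auto
    qed
    moreover have u_le: "u \<le> q" if "q \<in> C" for q
      unfolding u_def le_fun_def using cINF_lower[OF bdd that] by blast
    moreover have "u \<le> p"
    proof -
      obtain q where "q \<in> C"
        using False by blast
      with u_le CA(2) show ?thesis
        by (blast intro: order_trans)
    qed
    ultimately show ?thesis
      by (auto simp: A_def P_def)
  qed
  ultimately obtain m where "m \<in> A" "\<And>q. q \<in> A \<Longrightarrow> P m q \<Longrightarrow> q = m"
    using predicate_Zorn by metis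
  then show ?thesis
    using that by (auto simp: A_def P_def intro: order_trans)
qed

lemma minimal_sublinear_linear:
  assumes m: "sublinear m" and min: "\<And>q. sublinear q \<Longrightarrow> q \<le> m \<Longrightarrow> q = m"
  shows "linear m"
proof -
  have minus: "m (- y) = - m y" for y
  proof -
    have "sublinear_shift m y = m"
      using min sublinear_sublinear_shift[OF m] sublinear_shift_le_self[OF m]
      by (simp add: le_fun_def)
    then have "m (- y) \<le> - m y"
      using sublinear_shift_minus[OF m, of y] by simp
    with sublinear_minus[OF m, of y] show ?thesis by simp
  qed
  show ?thesis
  proof (rule linearI)
    fix x y
    have "m x \<le> m (x + y) + m (- y)"
      using sublinear_add[OF m, of "x + y" "- y"] by simp
    then show "m (x + y) = m x + m y"
      using minus[of y] sublinear_add[OF m, of x y] by simp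
  next
    fix c :: real and x
    show "m (c *\<^sub>R x) = c *\<^sub>R m x"
    proof (cases "0 \<le> c")
      case True
      then show ?thesis using sublinear_scaleR[OF m] by simp
    next
      case False
      then have "m (c *\<^sub>R x) = - m ((- c) *\<^sub>R x)"
        using minus[of "(- c) *\<^sub>R x"] by simp
      with False show ?thesis
        using sublinear_scaleR[OF m, of "- c" x] by simp
    qed
  qed
qed

theorem hahn_banach:
  assumes "sublinear p"
  shows "\<exists>L. linear L \<and> L \<le> p"
  using exists_minimal_sublinear_below[OF assms] minimal_sublinear_linear by metis

lemma hahn_banach_at:
  assumes p: "sublinear p"
  shows "\<exists>L. linear L \<and> L \<le> p \<and> L x0 = p x0"
proof -
  obtain L where L: "linear L" "L \<le> sublinear_shift p x0"
    using hahn_banach[OF sublinear_sublinear_shift[OF p]] by blast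
  then have "L \<le> p"
    using sublinear_shift_le_self[OF p] by (meson le_fun_def order_trans)
  moreover have "- L x0 \<le> - p x0"
    using le_funD[OF L(2), of "- x0"] sublinear_shift_minus[OF p, of x0] linear_neg[OF L(1)]
    by simp
  ultimately show ?thesis
    using L(1) le_funD[of L p x0] by force
qed

lemma hahn_banach_blinfun:
  fixes p :: "'a::real_normed_vector \<Rightarrow> real"
  assumes p: "sublinear p" and bound: "\<And>x. p x \<le> K * norm x"
  shows "\<exists>w. (\<forall>x. blinfun_apply w x \<le> p x) \<and> blinfun_apply w x0 = p x0"
proof -
  obtain L where L: "linear L" "L \<le> p" "L x0 = p x0"
    using hahn_banach_at[OF p] by blast
  have "\<bar>L x\<bar> \<le> K * norm x" for x
    using le_funD[OF L(2), of x] le_funD[OF L(2), of "- x"] bound[of x] bound[of "- x"]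
      linear_neg[OF L(1), of x]
    by auto
  then have "bounded_linear L"
    using L(1) by (intro bounded_linear_intro[of L K]) (auto simp: linear_add linear_scale mult.commute)
  then show ?thesis
    using L(2,3) by (intro exI[of _ "Blinfun L"]) (simp add: bounded_linear_Blinfun_apply le_fun_def)
qed

lemma norming_functional:
  fixes x :: "'a::real_normed_vector"
  obtains h :: "'a \<Rightarrow>\<^sub>L real" where "norm h \<le> 1" "blinfun_apply h x = norm x"
proof -
  have "sublinear (norm :: 'a \<Rightarrow> real)"
    by (rule sublinearI) (simp_all add: norm_triangle_ineq)
  then obtain h :: "'a \<Rightarrow>\<^sub>L real" where h: "\<And>y. blinfun_apply h y \<le> norm y" "blinfun_apply h x = norm x"
    using hahn_banach_blinfun[of norm 1] by auto
  have "\<bar>blinfun_apply h y\<bar> \<le> 1 * norm y" for y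
    using h(1)[of y] h(1)[of "- y"] by (simp add: blinfun.minus_right)
  then have "norm h \<le> 1"
    by (intro norm_blinfun_bound) auto
  with h(2) show ?thesis using that by blast
qed

section \<open>Separation theorems and the weak-star topology\<close>

lemma open_contains_scaled_beyond:
  fixes C :: "'a::real_normed_vector set"
  assumes "open C" "s0 *\<^sub>R y \<in> C"
  obtains s where "s0 < s" "s *\<^sub>R y \<in> C"
proof -
  have "((\<lambda>s. s *\<^sub>R y) \<longlongrightarrow> s0 *\<^sub>R y) (at_right s0)"
    by (intro tendsto_intros)
  then have "\<forall>\<^sub>F s in at_right s0. s *\<^sub>R y \<in> C"
    using assms by (rule topological_tendstoD)
  moreover have "\<forall>\<^sub>F s in at_right s0. s \<in> {s0<..<s0 + 1}"
    by (rule eventually_at_right_real) simp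
  ultimately have "\<forall>\<^sub>F s in at_right s0. s *\<^sub>R y \<in> C \<and> s \<in> {s0<..<s0 + 1}"
    by (rule eventually_conj)
  moreover have "at_right s0 \<noteq> bot"
    by simp
  ultimately obtain s where "s *\<^sub>R y \<in> C" "s \<in> {s0<..<s0 + 1}"
    using eventually_happens' by blast
  with that show ?thesis by auto
qed

definition minkowski_functional :: "'a::real_vector set \<Rightarrow> 'a \<Rightarrow> real" where
  "minkowski_functional C y = Inf {t. 0 < t \<and> inverse t *\<^sub>R y \<in> C}"

context
  fixes C :: "'a::real_normed_vector set"
  assumes C: "open C" "convex C" "0 \<in> C"
begin

lemma minkowski_functional_le:
  assumes "0 < t" "inverse t *\<^sub>R y \<in> C"
  shows "minkowski_functional C y \<le> t"
  unfolding minkowski_functional_def using assms by (intro cInf_lower bdd_belowI[of _ 0]) auto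

lemma minkowski_functional_ge:
  assumes "\<And>t. 0 < t \<Longrightarrow> inverse t *\<^sub>R y \<in> C \<Longrightarrow> c \<le> t"
  shows "c \<le> minkowski_functional C y"
proof -
  obtain s where "0 < s" "s *\<^sub>R y \<in> C"
    using open_contains_scaled_beyond[of C 0 y] C by auto
  then have "inverse s \<in> {t. 0 < t \<and> inverse t *\<^sub>R y \<in> C}"
    by simp
  then have "{t. 0 < t \<and> inverse t *\<^sub>R y \<in> C} \<noteq> {}"
    by blast
  then show ?thesis
    unfolding minkowski_functional_def using assms by (intro cInf_greatest) auto
qed

lemma sublinear_minkowski_functional: "sublinear (minkowski_functional C)"
proof (rule sublinearI)
  fix y1 y2
  have "minkowski_functional C (y1 + y2) \<le> t1 + t2"
    if t1: "0 < t1" "inverse t1 *\<^sub>R y1 \<in> C" and t2: "0 < t2" "inverse t2 *\<^sub>R y2 \<in> C" for t1 t2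
  proof (rule minkowski_functional_le)
    have "(t1 / (t1 + t2)) *\<^sub>R (inverse t1 *\<^sub>R y1) + (t2 / (t1 + t2)) *\<^sub>R (inverse t2 *\<^sub>R y2) \<in> C"
      using t1 t2 by (intro convexD[OF C(2)]) (simp_all add: add_divide_distrib[symmetric])
    moreover have "t1 / (t1 + t2) * inverse t1 = inverse (t1 + t2)"
      "t2 / (t1 + t2) * inverse t2 = inverse (t1 + t2)"
      using t1 t2 by (simp_all add: field_simps)
    then have "(t1 / (t1 + t2)) *\<^sub>R (inverse t1 *\<^sub>R y1) + (t2 / (t1 + t2)) *\<^sub>R (inverse t2 *\<^sub>R y2)
        = inverse (t1 + t2) *\<^sub>R (y1 + y2)"
      by (simp add: scaleR_add_right)
    ultimately show "inverse (t1 + t2) *\<^sub>R (y1 + y2) \<in> C"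
      by simp
  qed (use t1 t2 in simp)
  then have "minkowski_functional C (y1 + y2) - t2 \<le> minkowski_functional C y1"
    if "0 < t2" "inverse t2 *\<^sub>R y2 \<in> C" for t2
    using that by (intro minkowski_functional_ge) force
  then have "minkowski_functional C (y1 + y2) - minkowski_functional C y1 \<le> minkowski_functional C y2"
    by (intro minkowski_functional_ge) force
  then show "minkowski_functional C (y1 + y2) \<le> minkowski_functional C y1 + minkowski_functional C y2"
    by simp
next
  have "minkowski_functional C 0 \<le> t" if "0 < t" for t
    using that C(3) by (intro minkowski_functional_le) auto
  then show "minkowski_functional C 0 \<le> 0"
    by (meson dense not_le)
next
  fix c :: real and y assume c: "0 < c"
  have "minkowski_functional C (c *\<^sub>R y) / c \<le> t" if "0 < t" "inverse t *\<^sub>R y \<in> C" for t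
  proof -
    have "inverse (c * t) *\<^sub>R (c *\<^sub>R y) = inverse t *\<^sub>R y"
      using c by simp
    then have "minkowski_functional C (c *\<^sub>R y) \<le> c * t"
      using minkowski_functional_le[of "c * t" "c *\<^sub>R y"] that c by (metis mult_pos_pos)
    with c show ?thesis by (simp add: field_simps)
  qed
  then have "minkowski_functional C (c *\<^sub>R y) / c \<le> minkowski_functional C y"
    by (rule minkowski_functional_ge)
  with c show "minkowski_functional C (c *\<^sub>R y) \<le> c * minkowski_functional C y"
    by (simp add: field_simps)
qed

lemma minkowski_functional_less_one:
  assumes "y \<in> C"
  shows "minkowski_functional C y < 1"
proof -
  obtain s where "1 < s" "s *\<^sub>R y \<in> C"
    using open_contains_scaled_beyond[of C 1 y] C assms by auto
  then have "minkowski_functional C y \<le> inverse s"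
    by (intro minkowski_functional_le) auto
  also have "inverse s < 1"
    using \<open>1 < s\<close> by (auto simp: field_simps)
  finally show ?thesis .
qed

lemma one_le_minkowski_functional:
  assumes "y \<notin> C"
  shows "1 \<le> minkowski_functional C y"
proof (rule minkowski_functional_ge, rule ccontr)
  fix t :: real assume t: "0 < t" "inverse t *\<^sub>R y \<in> C" "\<not> 1 \<le> t"
  then have "t *\<^sub>R (inverse t *\<^sub>R y) + (1 - t) *\<^sub>R 0 \<in> C"
    by (intro convexD[OF C(2) _ C(3)]) simp_all
  with t(1) assms show False by simp
qed

end

lemma separation_open_convex_point:
  fixes U :: "'a::real_normed_vector set"
  assumes U: "open U" "convex U" and y: "y \<notin> U"
  shows "\<exists>L :: 'a \<Rightarrow> real. linear L \<and> (\<forall>u\<in>U. L u < L y)"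
proof (cases "U = {}")
  case True
  then show ?thesis using linear_zero by blast
next
  case False
  then obtain u0 where u0: "u0 \<in> U" by blast
  define C where "C = (+) (- u0) ` U"
  have "0 \<in> C"
    unfolding C_def using u0 by (intro image_eqI[of _ _ u0]) simp_all
  then have C: "open C" "convex C" "0 \<in> C"
    using open_translation[OF U(1), of "- u0"] convex_translation[OF U(2), of "- u0"]
    unfolding C_def by blast+
  have "y - u0 \<notin> C"
  proof
    assume "y - u0 \<in> C"
    then obtain u where "u \<in> U" "y - u0 = - u0 + u"
      unfolding C_def by blast
    with y show False by simp
  qed
  obtain L where L: "linear L" "L \<le> minkowski_functional C" "L (y - u0) = minkowski_functional C (y - u0)"
    using hahn_banach_at[OF sublinear_minkowski_functional[OF C]] by blast
  have "L u < L y" if "u \<in> U" for u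
  proof -
    have "u - u0 \<in> C"
      unfolding C_def using that by (intro image_eqI[of _ _ u]) simp_all
    then have "L (u - u0) < 1"
      using le_funD[OF L(2), of "u - u0"] minkowski_functional_less_one[OF C] by (meson le_less_trans)
    moreover have "1 \<le> L (y - u0)"
      using L(3) one_le_minkowski_functional[OF C \<open>y - u0 \<notin> C\<close>] by simp
    ultimately show ?thesis
      using linear_diff[OF L(1)] by simp
  qed
  with L(1) show ?thesis by (intro exI[of _ L]) auto
qed

lemma separation_open_convex_sets:
  fixes W C :: "'a::real_normed_vector set"
  assumes W: "open W" "convex W" and C: "convex C" and disj: "W \<inter> C = {}"
  shows "\<exists>L :: 'a \<Rightarrow> real. linear L \<and> (\<forall>w\<in>W. \<forall>c\<in>C. L c < L w)"
proof -
  define U where "U = (\<Union>w\<in>W. \<Union>c\<in>C. {w - c})"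
  have "U = (\<Union>c\<in>C. (\<lambda>w. w - c) ` W)"
    unfolding U_def by auto
  moreover have "open (\<Union>c\<in>C. (\<lambda>w. w - c) ` W)"
    using W(1) by (intro open_UN ballI open_translation_subtract)
  ultimately have "open U"
    by simp
  moreover have "convex U"
    using W(2) C unfolding U_def by (rule convex_differences)
  moreover have "0 \<notin> U"
    using disj unfolding U_def by fastforce
  ultimately obtain L :: "'a \<Rightarrow> real" where L: "linear L" "\<And>u. u \<in> U \<Longrightarrow> L u < L 0"
    by (metis separation_open_convex_point)
  have "- L c < - L w" if "w \<in> W" "c \<in> C" for w c
  proof -
    have "w - c \<in> U"
      using that unfolding U_def by blast
    then show ?thesis
      using L(2)[of "w - c"] linear_0[OF L(1)] linear_diff[OF L(1)] by simp
  qed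
  moreover have "linear (\<lambda>x. - L x)"
    using L(1) by (simp add: linear_iff)
  ultimately show ?thesis by blast
qed

definition weak_star_nbhd :: "('a::real_normed_vector \<Rightarrow>\<^sub>L real) \<Rightarrow> 'a list \<Rightarrow> real \<Rightarrow> ('a \<Rightarrow>\<^sub>L real) set" where
  "weak_star_nbhd a xs e = {w. \<forall>x\<in>set xs. \<bar>blinfun_apply w x - blinfun_apply a x\<bar> < e}"

lemma weak_star_nbhd_eq_INT:
  "weak_star_nbhd a xs e = (\<Inter>x\<in>set xs. (\<lambda>w. blinfun_apply w x) -` ball (blinfun_apply a x) e)"
  by (auto simp: weak_star_nbhd_def dist_real_def abs_minus_commute)

lemma open_weak_star_nbhd: "open (weak_star_nbhd a xs e)"
  unfolding weak_star_nbhd_eq_INT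
  by (intro open_INT finite_set ballI continuous_open_vimage open_ball) (auto intro: continuous_intros)

lemma convex_weak_star_nbhd: "convex (weak_star_nbhd a xs e)"
proof -
  have "linear (\<lambda>w::'a \<Rightarrow>\<^sub>L real. blinfun_apply w x)" for x
    by (rule linearI) (simp_all add: blinfun.add_left blinfun.scaleR_left)
  then show ?thesis
    unfolding weak_star_nbhd_eq_INT by (intro convex_INT convex_linear_vimage convex_ball)
qed

lemma openin_weak_star_evaluation:
  "open U \<Longrightarrow> openin weak_star_topology {w. blinfun_apply w x \<in> U}"
  unfolding weak_star_topology_def by (rule topology_generated_by_Basis) blast

lemma topspace_weak_star_topology: "topspace weak_star_topology = UNIV"
  using openin_subset[OF openin_weak_star_evaluation[OF open_UNIV, of 0]] by auto

lemma openin_weak_star_topology_nbhd: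
  assumes "openin weak_star_topology Q" "a \<in> Q"
  shows "\<exists>xs e. 0 < e \<and> weak_star_nbhd a xs e \<subseteq> Q"
proof -
  have "generate_topology_on {{w. blinfun_apply w x \<in> U} | x U. open U} Q"
    using assms(1) unfolding weak_star_topology_def by (rule openin_topology_generated_by)
  then show ?thesis
    using assms(2)
  proof (induction arbitrary: a)
    case Empty
    then show ?case by simp
  next
    case (Int A B)
    then obtain xs1 e1 xs2 e2 where "0 < e1" "weak_star_nbhd a xs1 e1 \<subseteq> A"
      "0 < e2" "weak_star_nbhd a xs2 e2 \<subseteq> B"
      by blast
    then have "0 < min e1 e2 \<and> weak_star_nbhd a (xs1 @ xs2) (min e1 e2) \<subseteq> A \<inter> B"
      by (auto simp: weak_star_nbhd_def)
    then show ?case by blast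
  next
    case (UN K)
    then show ?case by blast
  next
    case (Basis s)
    then obtain x U where s: "s = {w. blinfun_apply w x \<in> U}" "open U"
      by blast
    moreover have "blinfun_apply a x \<in> U"
      using Basis s by simp
    ultimately obtain e where "0 < e" "ball (blinfun_apply a x) e \<subseteq> U"
      using open_contains_ball by blast
    with s have "weak_star_nbhd a [x] e \<subseteq> s"
      by (auto simp: weak_star_nbhd_def dist_real_def abs_minus_commute)
    with \<open>0 < e\<close> show ?case by blast
  qed
qed

lemma linear_functional_eq_evaluation:
  fixes xs :: "'a::real_normed_vector list" and L :: "('a \<Rightarrow>\<^sub>L real) \<Rightarrow> real"
  assumes "linear L" "\<And>\<phi>. (\<forall>x\<in>set xs. blinfun_apply \<phi> x = 0) \<Longrightarrow> L \<phi> = 0"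
  shows "\<exists>x. \<forall>\<phi>. L \<phi> = blinfun_apply \<phi> x"
  using assms
proof (induction xs arbitrary: L)
  case Nil
  then show ?case by (intro exI[of _ 0]) simp
next
  case (Cons x0 xs)
  show ?case
  proof (cases "\<exists>e :: 'a \<Rightarrow>\<^sub>L real. (\<forall>x\<in>set xs. blinfun_apply e x = 0) \<and> blinfun_apply e x0 = 1")
    case True
    then obtain e :: "'a \<Rightarrow>\<^sub>L real" where e: "\<forall>x\<in>set xs. blinfun_apply e x = 0" "blinfun_apply e x0 = 1"
      by blast
    define L' where "L' \<phi> = L \<phi> - L e * blinfun_apply \<phi> x0" for \<phi>
    have "linear L'"
      unfolding L'_def using Cons.prems(1)
      by (intro linearI) (simp_all add: linear_add linear_scale algebra_simps blinfun.add_left blinfun.scaleR_left)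
    moreover have "L' \<phi> = 0" if "\<forall>x\<in>set xs. blinfun_apply \<phi> x = 0" for \<phi>
    proof -
      have "\<forall>x\<in>set (x0 # xs). blinfun_apply (\<phi> - blinfun_apply \<phi> x0 *\<^sub>R e) x = 0"
        using that e by (simp add: blinfun.diff_left blinfun.scaleR_left)
      then have "L (\<phi> - blinfun_apply \<phi> x0 *\<^sub>R e) = 0"
        using Cons.prems(2) by blast
      then show ?thesis
        using Cons.prems(1) by (simp add: L'_def linear_diff linear_scale)
    qed
    ultimately obtain x' where x': "\<And>\<phi>. L' \<phi> = blinfun_apply \<phi> x'"
      using Cons.IH by blast
    have "L \<phi> = blinfun_apply \<phi> (x' + L e *\<^sub>R x0)" for \<phi>
      using x'[of \<phi>] by (simp add: L'_def blinfun.add_right blinfun.scaleR_right algebra_simps)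
    then show ?thesis by blast
  next
    case False
    have "L \<phi> = 0" if "\<forall>x\<in>set xs. blinfun_apply \<phi> x = 0" for \<phi>
    proof (cases "blinfun_apply \<phi> x0 = 0")
      case True
      with that Cons.prems(2) show ?thesis by simp
    next
      case nonzero: False
      have "(\<forall>x\<in>set xs. blinfun_apply (inverse (blinfun_apply \<phi> x0) *\<^sub>R \<phi>) x = 0)
          \<and> blinfun_apply (inverse (blinfun_apply \<phi> x0) *\<^sub>R \<phi>) x0 = 1"
        using that nonzero by (simp add: blinfun.scaleR_left)
      with False show ?thesis by blast
    qed
    with Cons.IH[OF Cons.prems(1)] show ?thesis by blast
  qed
qed

text \<open>A weak-star neighbourhood contains whole affine subspaces of finite codimension, on which
  a linear functional bounded below must be constant.\<close>

lemma linear_bounded_below_on_weak_star_nbhd: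
  fixes L :: "('a::real_normed_vector \<Rightarrow>\<^sub>L real) \<Rightarrow> real"
  assumes L: "linear L" and e: "0 < e" and bound: "\<And>w. w \<in> weak_star_nbhd a xs e \<Longrightarrow> c < L w"
  shows "\<exists>x. \<forall>\<phi>. L \<phi> = blinfun_apply \<phi> x"
proof (rule linear_functional_eq_evaluation[OF L], rule ccontr)
  fix \<phi> :: "'a \<Rightarrow>\<^sub>L real"
  assume \<phi>: "\<forall>x\<in>set xs. blinfun_apply \<phi> x = 0" and "L \<phi> \<noteq> 0"
  define t where "t = (c - L a) / L \<phi>"
  have "a + t *\<^sub>R \<phi> \<in> weak_star_nbhd a xs e"
    using e \<phi> by (simp add: weak_star_nbhd_def blinfun.add_left blinfun.scaleR_left)
  then have "c < L (a + t *\<^sub>R \<phi>)"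
    by (rule bound)
  then have "c < L a + t * L \<phi>"
    using L by (simp add: linear_add linear_scale)
  with \<open>L \<phi> \<noteq> 0\<close> show False
    by (simp add: t_def)
qed

lemma weak_star_separation:
  fixes C :: "('a::real_normed_vector \<Rightarrow>\<^sub>L real) set"
  assumes C: "convex C" "closedin weak_star_topology C" and a: "a \<notin> C"
  shows "\<exists>x \<gamma>. 0 < \<gamma> \<and> (\<forall>w\<in>C. blinfun_apply w x \<le> blinfun_apply a x - \<gamma>)"
proof (cases "C = {}")
  case True
  then show ?thesis by (intro exI[of _ 0] exI[of _ 1]) auto
next
  case False
  then obtain c0 where c0: "c0 \<in> C" by blast
  have "openin weak_star_topology (UNIV - C)"
    using C(2) unfolding closedin_def topspace_weak_star_topology by simp
  then obtain xs e where e: "0 < e" "weak_star_nbhd a xs e \<subseteq> UNIV - C"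
    using openin_weak_star_topology_nbhd a by blast
  define W where "W = weak_star_nbhd a xs e"
  have aW: "a \<in> W"
    using e(1) by (simp add: W_def weak_star_nbhd_def)
  obtain L :: "('a \<Rightarrow>\<^sub>L real) \<Rightarrow> real" where
    L: "linear L" "\<And>w c. w \<in> W \<Longrightarrow> c \<in> C \<Longrightarrow> L c < L w"
    using separation_open_convex_sets[OF open_weak_star_nbhd convex_weak_star_nbhd C(1), of a xs e] e(2)
    unfolding W_def by blast
  then obtain x where x: "\<And>\<phi>. L \<phi> = blinfun_apply \<phi> x"
    using linear_bounded_below_on_weak_star_nbhd[OF L(1) e(1)] c0 unfolding W_def by blast
  obtain r where r: "0 < r" "ball a r \<subseteq> W"
    using open_contains_ball aW open_weak_star_nbhd unfolding W_def by blast
  obtain h :: "'a \<Rightarrow>\<^sub>L real" where h: "norm h \<le> 1" "blinfun_apply h x = norm x"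
    using norming_functional by blast
  have "a - (r / 2) *\<^sub>R h \<in> W"
    using r h(1) by (intro subsetD[OF r(2)]) (simp add: dist_norm)
  then have "L c < L (a - (r / 2) *\<^sub>R h)" if "c \<in> C" for c
    using L(2) that by blast
  moreover have "L (a - (r / 2) *\<^sub>R h) = blinfun_apply a x - r / 2 * norm x"
    using x h(2) by (simp add: blinfun.diff_left blinfun.scaleR_left)
  ultimately have "blinfun_apply c x < blinfun_apply a x - r / 2 * norm x" if "c \<in> C" for c
    using that x by metis
  moreover have "x \<noteq> 0"
    using L(2)[OF aW c0] x by auto
  ultimately show ?thesis
    using r(1) by (intro exI[of _ x] exI[of _ "r / 2 * norm x"]) (auto intro: less_imp_le)
qed

lemma mem_weak_star_closed_convex_hull:
  assumes "S \<noteq> {}"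
    and le: "\<And>x. bdd_above ((\<lambda>w. blinfun_apply w x) ` S) \<Longrightarrow>
               blinfun_apply a x \<le> (SUP w\<in>S. blinfun_apply w x)"
  shows "a \<in> weak_star_closed_convex_hull S"
  unfolding weak_star_closed_convex_hull_def
proof (intro InterI, clarify, rule ccontr)
  fix C assume C: "convex C" "closedin weak_star_topology C" "S \<subseteq> C" "a \<notin> C"
  then obtain x \<gamma> where "0 < \<gamma>" and sep: "\<And>w. w \<in> S \<Longrightarrow> blinfun_apply w x \<le> blinfun_apply a x - \<gamma>"
    using weak_star_separation[OF C(1,2,4)] by blast
  then have "bdd_above ((\<lambda>w. blinfun_apply w x) ` S)"
    by (intro bdd_aboveI2) auto
  moreover have "(SUP w\<in>S. blinfun_apply w x) \<le> blinfun_apply a x - \<gamma>"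
    using assms(1) sep by (intro cSUP_least) auto
  ultimately show False
    using le[of x] \<open>0 < \<gamma>\<close> by simp
qed

section \<open>Convex functions\<close>

lemma edom_iff: "x \<in> edom f \<longleftrightarrow> f x \<noteq> \<infinity>"
  unfolding edom_def by (cases "f x") auto

lemma proper_fun_neq_minf: "proper_fun f \<Longrightarrow> f x \<noteq> -\<infinity>"
  unfolding proper_fun_def by blast

lemma proper_fun_edomE:
  assumes "proper_fun f" "x \<in> edom f"
  obtains a where "f x = ereal a"
  using assms proper_fun_neq_minf[OF assms(1), of x] by (cases "f x") (auto simp: edom_iff)

lemma convex_funD:
  assumes "convex_fun f" "f x \<le> ereal a" "f y \<le> ereal b" "0 \<le> t" "t \<le> 1"
  shows "f ((1 - t) *\<^sub>R x + t *\<^sub>R y) \<le> ereal ((1 - t) * a + t * b)"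
proof -
  have "(1 - t) *\<^sub>R (x, a) + t *\<^sub>R (y, b) \<in> epigraph_e f"
    using assms unfolding convex_fun_def
    by (intro convexD_alt) (auto simp: epigraph_e_def)
  then show ?thesis by (simp add: epigraph_e_def)
qed

lemma convex_edom:
  assumes "proper_fun f" "convex_fun f"
  shows "convex (edom f)"
proof (rule convexI)
  fix y1 y2 and s t :: real
  assume y: "y1 \<in> edom f" "y2 \<in> edom f" and st: "0 \<le> s" "0 \<le> t" "s + t = 1"
  obtain b1 b2 where "f y1 = ereal b1" "f y2 = ereal b2"
    using y proper_fun_edomE[OF assms(1)] by metis
  then have "f ((1 - t) *\<^sub>R y1 + t *\<^sub>R y2) \<le> ereal ((1 - t) * b1 + t * b2)"
    using st by (intro convex_funD[OF assms(2)]) auto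
  moreover have "s = 1 - t" using st by simp
  ultimately show "s *\<^sub>R y1 + t *\<^sub>R y2 \<in> edom f" by (auto simp: edom_def)
qed

lemma lsc_fun_LIMSEQ:
  assumes "lsc_fun f" "X \<longlonglongrightarrow> x" "R \<longlonglongrightarrow> r"
    and "\<forall>\<^sub>F n in sequentially. f (X n) \<le> ereal (R n)"
  shows "f x \<le> ereal r"
proof -
  have "(x, r) \<in> epigraph_e f"
    using assms unfolding lsc_fun_def
    by (intro Lim_in_closed_set[of _ "\<lambda>n. (X n, R n)"] tendsto_Pair) (auto simp: epigraph_e_def)
  then show ?thesis by (simp add: epigraph_e_def)
qed

lemma closed_affine_sublevel:
  assumes "lsc_fun f"
  shows "closed {y. f y \<le> ereal (c + blinfun_apply w y)}"
proof -
  have "closed ((\<lambda>y. (y, c + blinfun_apply w y)) -` epigraph_e f)"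
    using assms unfolding lsc_fun_def
    by (rule continuous_closed_vimage) (intro continuous_intros)
  then show ?thesis by (simp add: epigraph_e_def)
qed

lemma convex_affine_sublevel:
  assumes "convex_fun f"
  shows "convex {y. f y \<le> ereal (c + blinfun_apply w y)}"
proof -
  have "f ((1 - t) *\<^sub>R y1 + t *\<^sub>R y2) \<le> ereal (c + blinfun_apply w ((1 - t) *\<^sub>R y1 + t *\<^sub>R y2))"
    if "f y1 \<le> ereal (c + blinfun_apply w y1)" "f y2 \<le> ereal (c + blinfun_apply w y2)"
      "0 \<le> t" "t \<le> 1" for y1 y2 t
    using convex_funD[OF assms that]
    by (simp add: blinfun.add_right blinfun.diff_right blinfun.scaleR_right algebra_simps)
  then show ?thesis
    unfolding convex_alt by simp
qed

lemma edom_subset_UN_sublevel: "edom f \<subseteq> (\<Union>n::nat. {y. f y \<le> ereal (real n)})"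
proof
  fix y assume "y \<in> edom f"
  then have "\<exists>n::nat. f y \<le> ereal (real n)"
  proof (cases "f y")
    case (real r)
    then show ?thesis using real_arch_simple[of r] by auto
  qed (auto simp: edom_iff)
  then show "y \<in> (\<Union>n::nat. {y. f y \<le> ereal (real n)})"
    by blast
qed

lemma lsc_fun_bounded_above_on_ball:
  fixes f :: "'a::banach \<Rightarrow> ereal"
  assumes lsc: "lsc_fun f" and int: "interior (edom f) \<noteq> {}"
  obtains c r M where "0 < r" "\<forall>y\<in>ball c r. f y \<le> ereal M"
proof (rule ccontr)
  assume unbounded: "\<not> thesis"
  define G where "G = range (\<lambda>n::nat. {y. f y \<le> ereal (real n)})"
  have "euclidean interior_of \<Union>G = {}"
  proof (rule Baire_category_alt)
    show "completely_metrizable_space (euclidean :: 'a topology) \<or>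
        locally_compact_space (euclidean :: 'a topology) \<and> regular_space (euclidean :: 'a topology)"
      using completely_metrizable_space_euclidean by blast
    show "countable G"
      by (simp add: G_def)
    fix T assume "T \<in> G"
    then obtain n :: nat where T: "T = {y. f y \<le> ereal (real n)}"
      by (auto simp: G_def)
    have "closed T"
      using closed_affine_sublevel[OF lsc, of "real n" 0] by (simp add: T)
    moreover have "interior T = {}"
    proof (rule ccontr)
      assume "interior T \<noteq> {}"
      then obtain c where "c \<in> interior T"
        by blast
      then obtain r where "0 < r" "ball c r \<subseteq> interior T"
        using open_interior[of T, unfolded open_contains_ball] by blast
      then have "\<forall>y\<in>ball c r. f y \<le> ereal (real n)"
        using interior_subset[of T] T by blast
      with that[OF \<open>0 < r\<close>] unbounded show False
        by blast
    qed
    ultimately show "closedin euclidean T \<and> euclidean interior_of T = {}"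
      by simp
  qed
  moreover have "edom f \<subseteq> \<Union>G"
    using edom_subset_UN_sublevel by (simp add: G_def)
  then have "interior (edom f) \<subseteq> euclidean interior_of \<Union>G"
    by (simp add: interior_mono)
  ultimately show False
    using int by simp
qed

text \<open>Bounds on a ball around \<open>c\<close> propagate, through convex combinations with a point of
  the domain beyond \<open>x\<close>, to a ball around \<open>x\<close>.\<close>

lemma convex_fun_bounded_above_near:
  fixes f :: "'a::real_normed_vector \<Rightarrow> ereal"
  assumes pr: "proper_fun f" and cv: "convex_fun f"
    and r: "0 < r" and M: "\<forall>y\<in>ball c r. f y \<le> ereal M"
    and x: "x \<in> interior (edom f)"
  shows "\<exists>\<rho>>0. \<exists>M'. \<forall>y\<in>ball x \<rho>. f y \<le> ereal M'"
proof (cases "x = c")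
  case True
  with r M show ?thesis by blast
next
  case False
  obtain s where s: "0 < s" "ball x s \<subseteq> edom f"
    using x by (meson open_contains_ball_eq open_interior interior_subset subset_trans)
  define \<epsilon> where "\<epsilon> = s / (2 * norm (x - c))"
  define l where "l = \<epsilon> / (1 + \<epsilon>)"
  define p where "p = x + \<epsilon> *\<^sub>R (x - c)"
  have \<epsilon>: "0 < \<epsilon>"
    using s False by (simp add: \<epsilon>_def)
  then have l: "0 < l" "l < 1" "(1 - l) * \<epsilon> = l"
    by (simp_all add: l_def field_simps)
  have "norm (p - x) < s"
    using s False by (simp add: p_def \<epsilon>_def)
  then obtain fp where fp: "f p = ereal fp"
    using s proper_fun_edomE[OF pr] by (metis dist_norm mem_ball norm_minus_commute subsetD)
  have "f y \<le> ereal ((1 - l) * fp + l * M)" if y: "y \<in> ball x (r * l)" for y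
  proof -
    define q where "q = c + inverse l *\<^sub>R (y - x)"
    have "norm (q - c) = norm (y - x) / l"
      using l by (simp add: q_def divide_inverse_commute)
    also have "\<dots> < r"
      using y l by (simp add: dist_norm norm_minus_commute pos_divide_less_eq)
    finally have "f q \<le> ereal M"
      using M by (simp add: dist_norm norm_minus_commute)
    moreover have "(1 - l) *\<^sub>R p + l *\<^sub>R q = y"
    proof -
      have "(1 - l) *\<^sub>R p = (1 - l) *\<^sub>R x + l *\<^sub>R (x - c)"
        using l(3) by (simp add: p_def scaleR_add_right)
      moreover have "l *\<^sub>R q = l *\<^sub>R c + (y - x)"
        using l by (simp add: q_def scaleR_add_right)
      ultimately have "(1 - l) *\<^sub>R p + l *\<^sub>R q = ((1 - l) *\<^sub>R x + l *\<^sub>R (x - c)) + (l *\<^sub>R c + (y - x))"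
        by (simp only:)
      then show ?thesis
        by (simp add: algebra_simps)
    qed
    ultimately show ?thesis
      using convex_funD[OF cv _ _ less_imp_le less_imp_le, of p fp q M l] fp l by simp
  qed
  then show ?thesis
    using r l by (intro exI[of _ "r * l"] conjI exI[of _ "(1 - l) * fp + l * M"]) auto
qed

lemma convex_fun_locally_bounded_above:
  fixes f :: "'a::banach \<Rightarrow> ereal"
  assumes "proper_fun f" "convex_fun f" "lsc_fun f" "x \<in> interior (edom f)"
  obtains \<rho> M where "0 < \<rho>" "\<forall>y\<in>ball x \<rho>. f y \<le> ereal M"
proof -
  obtain c r M where "0 < r" "\<forall>y\<in>ball c r. f y \<le> ereal M"
    using lsc_fun_bounded_above_on_ball[OF assms(3)] assms(4) by blast
  with convex_fun_bounded_above_near[OF assms(1,2)] assms(4) that show ?thesis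
    by blast
qed

lemma convex_fun_upper_semicontinuous_at:
  fixes f :: "'a::real_normed_vector \<Rightarrow> ereal"
  assumes cv: "convex_fun f" and \<rho>: "0 < \<rho>" and M: "\<forall>y\<in>ball x \<rho>. f y \<le> ereal M"
    and fx: "f x = ereal a" and \<epsilon>: "0 < \<epsilon>"
  shows "\<exists>\<delta>>0. \<forall>y. norm (y - x) < \<delta> \<longrightarrow> f y \<le> ereal (a + \<epsilon>)"
proof -
  have aM: "a \<le> M"
    using M fx \<rho> by (metis centre_in_ball ereal_less_eq(3))
  define \<delta> where "\<delta> = min (\<rho> / 2) (\<epsilon> * \<rho> / (2 * (M - a + 1)))"
  have "f y \<le> ereal (a + \<epsilon>)" if y: "norm (y - x) < \<delta>" for y
  proof (cases "y = x")
    case True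
    with fx \<epsilon> show ?thesis by simp
  next
    case False
    define t where "t = 2 * norm (y - x) / \<rho>"
    define q where "q = x + inverse t *\<^sub>R (y - x)"
    have t: "0 < t" "t \<le> 1" "t < \<epsilon> / (M - a + 1)"
      using False y \<rho> \<epsilon> aM by (simp_all add: t_def \<delta>_def field_simps)
    have "t * (M - a) \<le> t * (M - a + 1)"
      using t(1) by simp
    also have "\<dots> < \<epsilon>"
      using t(3) aM by (simp add: field_simps)
    finally have tM: "t * (M - a) \<le> \<epsilon>"
      by simp
    have "norm (q - x) = \<rho> / 2"
      using False \<rho> by (simp add: q_def t_def)
    then have "f q \<le> ereal M"
      using M \<rho> by (simp add: dist_norm norm_minus_commute)
    moreover have "(1 - t) *\<^sub>R x + t *\<^sub>R q = y"
      using t by (simp add: q_def scaleR_add_right algebra_simps)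
    ultimately have "f y \<le> ereal ((1 - t) * a + t * M)"
      using convex_funD[OF cv _ _ less_imp_le[OF t(1)] t(2), of x a q M] fx by simp
    also have "(1 - t) * a + t * M \<le> a + \<epsilon>"
      using tM by (simp add: algebra_simps)
    finally show ?thesis by simp
  qed
  moreover have "0 < \<delta>"
    using \<rho> \<epsilon> aM by (simp add: \<delta>_def)
  ultimately show ?thesis by blast
qed

section \<open>Existence of subgradients at interior points\<close>

lemma subdiffI:
  assumes "f x = ereal a" "\<And>y. ereal (a + blinfun_apply v (y - x)) \<le> f y"
  shows "v \<in> subdiff f x"
  using assms unfolding subdiff_def by auto

lemma subdiffE:
  assumes "v \<in> subdiff f x"
  obtains a where "f x = ereal a" "\<And>y. ereal (a + blinfun_apply v (y - x)) \<le> f y"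
proof -
  have "f x \<noteq> \<infinity>" "f x \<noteq> -\<infinity>" "\<And>y. f x + ereal (blinfun_apply v (y - x)) \<le> f y"
    using assms unfolding subdiff_def by auto
  with that show ?thesis by (cases "f x") auto
qed

lemma exists_small_scaleR:
  fixes d :: "'a::real_normed_vector"
  assumes "0 < r"
  obtains t where "0 < t" "norm (t *\<^sub>R d) < r"
proof
  show "0 < r / (norm d + 1)"
    using assms by (simp add: add_nonneg_pos)
  have "norm ((r / (norm d + 1)) *\<^sub>R d) = r * (norm d / (norm d + 1))"
    using assms by (simp add: add_nonneg_pos)
  also have "\<dots> < r * 1"
    using assms by (intro mult_strict_left_mono) (simp_all add: add_nonneg_pos)
  finally show "norm ((r / (norm d + 1)) *\<^sub>R d) < r"
    by simp
qed

text \<open>The one-sided directional derivative \<open>f'(x; d)\<close> of a convex \<open>f\<close> with \<open>f x\<close> finite,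
  written with real upper bounds \<open>b\<close> of \<open>f (x + t d)\<close> so that it is real-valued.\<close>

definition dir_deriv :: "('a::real_vector \<Rightarrow> ereal) \<Rightarrow> 'a \<Rightarrow> 'a \<Rightarrow> real" where
  "dir_deriv f x d = Inf {(b - real_of_ereal (f x)) / t | t b. 0 < t \<and> f (x + t *\<^sub>R d) \<le> ereal b}"

context
  fixes f :: "'a::real_normed_vector \<Rightarrow> ereal" and x :: 'a and a \<rho> M :: real
  assumes cv: "convex_fun f" and fx: "f x = ereal a"
    and \<rho>: "0 < \<rho>" and M: "\<forall>y\<in>ball x \<rho>. f y \<le> ereal M"
begin

lemma dir_deriv_quotients_bdd_below:
  "bdd_below {(b - a) / t | t b. 0 < t \<and> f (x + t *\<^sub>R d) \<le> ereal b}"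
proof -
  obtain s where s: "0 < s" "norm (s *\<^sub>R d) < \<rho>"
    using exists_small_scaleR[OF \<rho>] by blast
  then have fM: "f (x - s *\<^sub>R d) \<le> ereal M"
    using M by (simp add: dist_norm)
  show ?thesis
  proof (rule bdd_belowI[of _ "(a - M) / s"], clarify)
    fix t b :: real assume t: "0 < t" and b: "f (x + t *\<^sub>R d) \<le> ereal b"
    define l where "l = t / (s + t)"
    have l: "0 \<le> l" "l \<le> 1" "(s + t) * (1 - l) = s" "(s + t) * l = t"
      using s t by (auto simp: l_def field_simps)
    have "(1 - l) *\<^sub>R (x + t *\<^sub>R d) + l *\<^sub>R (x - s *\<^sub>R d) = x + ((1 - l) * t - l * s) *\<^sub>R d"
      by (simp add: algebra_simps)
    also have "(1 - l) * t - l * s = 0"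
      using s t by (simp add: l_def field_simps)
    finally have "a \<le> (1 - l) * b + l * M"
      using convex_funD[OF cv b fM l(1,2)] fx by simp
    then have "(s + t) * a \<le> (s + t) * ((1 - l) * b + l * M)"
      using s t by simp
    also have "\<dots> = ((s + t) * (1 - l)) * b + ((s + t) * l) * M"
      by (simp add: algebra_simps)
    finally have "a * (s + t) \<le> s * b + t * M"
      unfolding l(3,4) by (simp add: algebra_simps)
    then show "(a - M) / s \<le> (b - a) / t"
      using s t by (simp add: field_simps)
  qed
qed

lemma dir_deriv_quotients_nonempty:
  "{(b - a) / t | t b. 0 < t \<and> f (x + t *\<^sub>R d) \<le> ereal b} \<noteq> {}"
proof -
  obtain t where "0 < t" "norm (t *\<^sub>R d) < \<rho>"
    using exists_small_scaleR[OF \<rho>] by blast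
  with M have "f (x + t *\<^sub>R d) \<le> ereal M"
    by (simp add: dist_norm)
  with \<open>0 < t\<close> show ?thesis by blast
qed

lemma dir_deriv_le:
  assumes "0 < t" "f (x + t *\<^sub>R d) \<le> ereal b"
  shows "dir_deriv f x d \<le> (b - a) / t"
  unfolding dir_deriv_def fx using assms dir_deriv_quotients_bdd_below
  by (intro cInf_lower) auto

lemma dir_deriv_ge:
  assumes "\<And>t b. 0 < t \<Longrightarrow> f (x + t *\<^sub>R d) \<le> ereal b \<Longrightarrow> c \<le> (b - a) / t"
  shows "c \<le> dir_deriv f x d"
  unfolding dir_deriv_def fx using assms dir_deriv_quotients_nonempty
  by (intro cInf_greatest) auto

lemma dir_deriv_add_le:
  assumes 1: "0 < t1" "f (x + t1 *\<^sub>R d1) \<le> ereal b1" and 2: "0 < t2" "f (x + t2 *\<^sub>R d2) \<le> ereal b2"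
  shows "dir_deriv f x (d1 + d2) \<le> (b1 - a) / t1 + (b2 - a) / t2"
proof -
  define t where "t = t1 * t2 / (t1 + t2)"
  define l where "l = t1 / (t1 + t2)"
  have t: "0 < t" "(1 - l) * t1 = t" "l * t2 = t"
    using 1 2 by (simp_all add: t_def l_def field_simps)
  have "(1 - l) *\<^sub>R (x + t1 *\<^sub>R d1) + l *\<^sub>R (x + t2 *\<^sub>R d2)
      = x + ((1 - l) * t1) *\<^sub>R d1 + (l * t2) *\<^sub>R d2"
    by (simp add: algebra_simps)
  also have "\<dots> = x + t *\<^sub>R (d1 + d2)"
    by (simp add: t(2,3) scaleR_add_right)
  finally have "f (x + t *\<^sub>R (d1 + d2)) \<le> ereal ((1 - l) * b1 + l * b2)"
    using convex_funD[OF cv 1(2) 2(2), of l] 1 2 by (simp add: l_def)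
  then have "dir_deriv f x (d1 + d2) \<le> ((1 - l) * b1 + l * b2 - a) / t"
    by (rule dir_deriv_le[OF t(1)])
  also have "(1 - l) * b1 + l * b2 - a = ((1 - l) * t1) * ((b1 - a) / t1) + (l * t2) * ((b2 - a) / t2)"
    using 1 2 by (simp add: field_simps)
  also have "\<dots> = t * ((b1 - a) / t1 + (b2 - a) / t2)"
    unfolding t(2,3) by (simp add: distrib_left)
  also have "\<dots> / t = (b1 - a) / t1 + (b2 - a) / t2"
    using t(1) by simp
  finally show ?thesis .
qed

lemma sublinear_dir_deriv: "sublinear (dir_deriv f x)"
proof (rule sublinearI)
  fix d1 d2
  have "dir_deriv f x (d1 + d2) - (b2 - a) / t2 \<le> dir_deriv f x d1"
    if "0 < t2" "f (x + t2 *\<^sub>R d2) \<le> ereal b2" for t2 b2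
    using dir_deriv_add_le that by (intro dir_deriv_ge) force
  then have "dir_deriv f x (d1 + d2) - dir_deriv f x d1 \<le> dir_deriv f x d2"
    by (intro dir_deriv_ge) force
  then show "dir_deriv f x (d1 + d2) \<le> dir_deriv f x d1 + dir_deriv f x d2"
    by simp
next
  show "dir_deriv f x 0 \<le> 0"
    using dir_deriv_le[of 1 0 a] fx by simp
next
  fix c :: real and d assume c: "0 < c"
  have "dir_deriv f x (c *\<^sub>R d) / c \<le> (b - a) / t"
    if "0 < t" "f (x + t *\<^sub>R d) \<le> ereal b" for t b
  proof -
    have "f (x + (t / c) *\<^sub>R (c *\<^sub>R d)) \<le> ereal b"
      using that c by simp
    then have "dir_deriv f x (c *\<^sub>R d) \<le> (b - a) / (t / c)"
      using that c by (intro dir_deriv_le) auto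
    with c that show ?thesis
      by (simp add: field_simps)
  qed
  then have "dir_deriv f x (c *\<^sub>R d) / c \<le> dir_deriv f x d"
    by (rule dir_deriv_ge)
  with c show "dir_deriv f x (c *\<^sub>R d) \<le> c * dir_deriv f x d"
    by (simp add: field_simps)
qed

lemma dir_deriv_le_norm: "dir_deriv f x d \<le> (2 * (M - a) / \<rho>) * norm d"
proof (cases "d = 0")
  case True
  then show ?thesis
    using sublinear_zero[OF sublinear_dir_deriv] by simp
next
  case False
  define t where "t = \<rho> / (2 * norm d)"
  have t: "0 < t" "norm (t *\<^sub>R d) = \<rho> / 2"
    using \<rho> False by (simp_all add: t_def)
  then have "f (x + t *\<^sub>R d) \<le> ereal M"
    using M \<rho> by (simp add: dist_norm)
  then have "dir_deriv f x d \<le> (M - a) / t"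
    by (rule dir_deriv_le[OF t(1)])
  also have "\<dots> = (2 * (M - a) / \<rho>) * norm d"
    using \<rho> False by (simp add: t_def field_simps)
  finally show ?thesis .
qed

lemma subdiff_nonempty_if_bounded_above:
  assumes pr: "proper_fun f"
  shows "\<exists>w. w \<in> subdiff f x"
proof -
  obtain w where w: "\<And>d. blinfun_apply w d \<le> dir_deriv f x d"
    using hahn_banach_blinfun[OF sublinear_dir_deriv dir_deriv_le_norm] by blast
  have "w \<in> subdiff f x"
  proof (rule subdiffI[of f x a, OF fx])
    fix y
    show "ereal (a + blinfun_apply w (y - x)) \<le> f y"
    proof (cases "f y")
      case (real b)
      then have "dir_deriv f x (y - x) \<le> (b - a) / 1"
        by (intro dir_deriv_le) simp_all
      with w[of "y - x"] real show ?thesis by simp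
    next
      case MInf
      with proper_fun_neq_minf[OF pr] show ?thesis by simp
    qed simp
  qed
  then show ?thesis by blast
qed

end

lemma interior_edom_subdiff_nonempty:
  fixes f :: "'a::banach \<Rightarrow> ereal"
  assumes "proper_fun f" "convex_fun f" "lsc_fun f" "x \<in> interior (edom f)"
  shows "\<exists>w. w \<in> subdiff f x"
proof -
  obtain \<rho> M where "0 < \<rho>" "\<forall>y\<in>ball x \<rho>. f y \<le> ereal M"
    using convex_fun_locally_bounded_above[OF assms] by blast
  moreover obtain a where "f x = ereal a"
    using assms(4) interior_subset proper_fun_edomE[OF assms(1)] by blast
  ultimately show ?thesis
    using subdiff_nonempty_if_bounded_above[OF assms(2)] assms(1) by blast
qed

section \<open>The conjugate and the subdifferential\<close>

lemma LIMSEQ_le_inverse_Suc: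
  fixes X :: "nat \<Rightarrow> real"
  assumes "\<And>n. 0 \<le> X n" "\<And>n. X n \<le> 1 / real (Suc n)"
  shows "X \<longlonglongrightarrow> 0"
proof (rule tendsto_sandwich[of "\<lambda>n. 0" _ _ "\<lambda>n. 1 / real (Suc n)"])
  show "(\<lambda>n. 1 / real (Suc n)) \<longlonglongrightarrow> 0"
    using LIMSEQ_inverse_real_of_nat by (simp add: inverse_eq_divide)
qed (use assms in auto)

lemma fconj_ge: "ereal (blinfun_apply v x) - f x \<le> fconj f v"
  unfolding fconj_def by (rule SUP_upper) simp

lemma fconj_ge_real: "f x = ereal a \<Longrightarrow> ereal (blinfun_apply v x - a) \<le> fconj f v"
  using fconj_ge[of v x f] by simp

lemma fconj_le: "(\<And>x. ereal (blinfun_apply v x) - f x \<le> c) \<Longrightarrow> fconj f v \<le> c"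
  unfolding fconj_def by (rule SUP_least)

lemma fconj_real_imp_neq_minf: "fconj f v = ereal F \<Longrightarrow> f x \<noteq> -\<infinity>"
  using fconj_ge[of v x f] by auto

lemma subdiffI_fenchel_young:
  assumes F: "fconj f v = ereal F" and a: "f z = ereal a" and eq: "a + F \<le> blinfun_apply v z"
  shows "v \<in> subdiff f z"
proof (rule subdiffI[of f z a, OF a])
  fix y
  show "ereal (a + blinfun_apply v (y - z)) \<le> f y"
  proof (cases "f y")
    case (real b)
    then have "blinfun_apply v y - b \<le> F"
      using fconj_ge_real[of f y b v] F by simp
    with real eq show ?thesis
      by (simp add: blinfun.diff_right)
  qed (use fconj_real_imp_neq_minf[OF F, of y] in auto)
qed

lemma fconj_maximizing_sequence:
  assumes F: "fconj f v = ereal F"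
  obtains Y fy where "\<And>n. f (Y n) = ereal (fy n)"
    "\<And>n. 0 \<le> F - (blinfun_apply v (Y n) - fy n)"
    "\<And>n. F - (blinfun_apply v (Y n) - fy n) \<le> 1 / real (Suc n)"
proof -
  have "\<exists>y. ereal (F - 1 / real (Suc n)) < ereal (blinfun_apply v y) - f y" for n
  proof -
    have "ereal (F - 1 / real (Suc n)) < fconj f v"
      using F by simp
    then show ?thesis
      unfolding fconj_def by (simp add: less_SUP_iff)
  qed
  then obtain Y where Y: "\<And>n. ereal (F - 1 / real (Suc n)) < ereal (blinfun_apply v (Y n)) - f (Y n)"
    by metis
  define fy where "fy n = real_of_ereal (f (Y n))" for n
  have fy: "f (Y n) = ereal (fy n)" for n
    using Y[of n] fconj_real_imp_neq_minf[OF F, of "Y n"] unfolding fy_def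
    by (cases "f (Y n)") auto
  show ?thesis
  proof (rule that[OF fy])
    show "0 \<le> F - (blinfun_apply v (Y n) - fy n)" for n
      using fconj_ge_real[of f "Y n" "fy n" v, OF fy[of n]] F by simp
    show "F - (blinfun_apply v (Y n) - fy n) \<le> 1 / real (Suc n)" for n
      using Y[of n] fy[of n] by simp
  qed
qed

lemma conj_frechet_deriv_fconj_real:
  assumes "conj_frechet_deriv f u z"
  obtains F where "fconj f u = ereal F"
proof -
  have "fconj f u \<noteq> \<infinity> \<and> fconj f u \<noteq> -\<infinity>"
    using assms unfolding conj_frechet_deriv_def by (auto dest: eventually_nhds_x_imp_x)
  with that show ?thesis by (cases "fconj f u") auto
qed

text \<open>Smulian's estimate: testing the differentiability of \<open>f*\<close> at \<open>u\<close> in the direction of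
  a norming functional of \<open>y - z\<close> bounds \<open>norm (y - z)\<close> by the Fenchel--Young gap at \<open>(y, u)\<close>.\<close>

lemma smulian_estimate:
  fixes f :: "'a::real_normed_vector \<Rightarrow> ereal"
  assumes D: "conj_frechet_deriv f u z" and \<epsilon>: "0 < \<epsilon>"
  obtains \<rho> where "0 < \<rho>" "\<And>y b. f y = ereal b \<Longrightarrow>
    norm (y - z) \<le> (real_of_ereal (fconj f u) - (blinfun_apply u y - b)) / \<rho> + \<epsilon>"
proof -
  define F where "F w = real_of_ereal (fconj f w)" for w
  have "\<forall>\<^sub>F w in nhds u. fconj f w \<noteq> \<infinity> \<and> fconj f w \<noteq> -\<infinity>"
    and der: "(F has_derivative (\<lambda>h. blinfun_apply h z)) (at u)"
    using D unfolding conj_frechet_deriv_def F_def by auto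
  then obtain d1 where d1: "0 < d1" "\<And>w. dist w u < d1 \<Longrightarrow> fconj f w = ereal (F w)"
    unfolding eventually_nhds_metric F_def by (metis real_of_ereal.elims)
  obtain d where d: "0 < d" "\<And>w. norm (w - u) < d \<Longrightarrow>
      norm (F w - F u - blinfun_apply (w - u) z) \<le> \<epsilon> * norm (w - u)"
    using der \<epsilon> unfolding has_derivative_at_alt by blast
  define \<rho> where "\<rho> = min d d1 / 2"
  have \<rho>: "0 < \<rho>" "\<rho> < d" "\<rho> < d1"
    using d d1 by (auto simp: \<rho>_def)
  have "norm (y - z) \<le> (F u - (blinfun_apply u y - b)) / \<rho> + \<epsilon>" if fy: "f y = ereal b" for y b
  proof -
    obtain h :: "'a \<Rightarrow>\<^sub>L real" where h: "norm h \<le> 1" "blinfun_apply h (y - z) = norm (y - z)"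
      using norming_functional by blast
    define w where "w = u + \<rho> *\<^sub>R h"
    have nw: "norm (w - u) \<le> \<rho>"
      using h(1) \<rho> by (simp add: w_def mult_left_le_one_le)
    then have "blinfun_apply w y - b \<le> F w"
      using fconj_ge_real[of f y b w, OF fy] d1(2)[of w] \<rho> by (simp add: dist_norm)
    moreover have "F w - F u - blinfun_apply (w - u) z \<le> \<epsilon> * \<rho>"
      using d(2)[of w] nw \<rho> \<epsilon> mult_left_mono[OF nw, of \<epsilon>] by (smt (verit) real_norm_def)
    ultimately have "\<rho> * blinfun_apply h (y - z) \<le> F u - (blinfun_apply u y - b) + \<epsilon> * \<rho>"
      by (simp add: w_def blinfun.add_left blinfun.scaleR_left blinfun.diff_right algebra_simps)
    with h(2) \<rho> show ?thesis
      by (simp add: field_simps)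
  qed
  with \<rho>(1) that show ?thesis
    unfolding F_def by blast
qed

lemma smulian_maximizing_sequence:
  fixes f :: "'a::real_normed_vector \<Rightarrow> ereal"
  assumes D: "conj_frechet_deriv f u z" and fy: "\<And>n. f (Y n) = ereal (fy n)"
    and gap: "(\<lambda>n. real_of_ereal (fconj f u) - (blinfun_apply u (Y n) - fy n)) \<longlonglongrightarrow> 0"
  shows "Y \<longlonglongrightarrow> z"
proof (rule LIMSEQ_I)
  fix r :: real assume r: "0 < r"
  define G where "G n = real_of_ereal (fconj f u) - (blinfun_apply u (Y n) - fy n)" for n
  obtain \<rho> where \<rho>: "0 < \<rho>" "\<And>n. norm (Y n - z) \<le> G n / \<rho> + r / 2"
    using smulian_estimate[OF D, of "r / 2"] fy r unfolding G_def by (metis half_gt_zero)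
  obtain N where N: "\<And>n. N \<le> n \<Longrightarrow> norm (G n - 0) < \<rho> * r / 2"
    using LIMSEQ_D[OF gap[folded G_def], of "\<rho> * r / 2"] \<rho>(1) r by auto
  have "norm (Y n - z) < r" if "N \<le> n" for n
  proof -
    have "G n < \<rho> * r / 2"
      using N[OF that] by (simp add: abs_less_iff)
    then have "G n / \<rho> < r / 2"
      using \<rho>(1) by (simp add: divide_less_eq mult.commute)
    with \<rho>(2)[of n] show ?thesis by linarith
  qed
  then show "\<exists>N. \<forall>n\<ge>N. norm (Y n - z) < r" by blast
qed

lemma conj_frechet_deriv_subdiff:
  fixes f :: "'a::real_normed_vector \<Rightarrow> ereal"
  assumes lsc: "lsc_fun f" and D: "conj_frechet_deriv f u z"
  shows "u \<in> subdiff f z"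
proof -
  obtain F where F: "fconj f u = ereal F"
    using conj_frechet_deriv_fconj_real[OF D] .
  obtain Y fy where fy: "\<And>n. f (Y n) = ereal (fy n)"
    and gap: "\<And>n. 0 \<le> F - (blinfun_apply u (Y n) - fy n)"
      "\<And>n. F - (blinfun_apply u (Y n) - fy n) \<le> 1 / real (Suc n)"
    using fconj_maximizing_sequence[OF F] by blast
  have "(\<lambda>n. F - (blinfun_apply u (Y n) - fy n)) \<longlonglongrightarrow> 0"
    using gap by (rule LIMSEQ_le_inverse_Suc)
  then have Y: "Y \<longlonglongrightarrow> z"
    using smulian_maximizing_sequence[OF D fy] F by simp
  have "f z \<le> ereal (blinfun_apply u z - F + 0)"
  proof (rule lsc_fun_LIMSEQ[OF lsc Y])
    show "(\<lambda>n. blinfun_apply u (Y n) - F + 1 / real (Suc n)) \<longlonglongrightarrow> blinfun_apply u z - F + 0"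
      using Y LIMSEQ_inverse_real_of_nat by (intro tendsto_intros) (simp_all add: inverse_eq_divide)
    show "\<forall>\<^sub>F n in sequentially. f (Y n) \<le> ereal (blinfun_apply u (Y n) - F + 1 / real (Suc n))"
      using gap(2) fy by (simp add: algebra_simps)
  qed
  with fconj_real_imp_neq_minf[OF F, of z] obtain a where "f z = ereal a" "a + F \<le> blinfun_apply u z"
    by (cases "f z") auto
  then show ?thesis
    using subdiffI_fenchel_young[OF F] by blast
qed

lemma subdiff_eq_INT:
  assumes "f x = ereal a"
  shows "subdiff f x = (\<Inter>y. {v. ereal (a + blinfun_apply v (y - x)) \<le> f y})"
  using assms unfolding subdiff_def by auto

lemma subgradient_constraint_cases:
  obtains "{v. ereal (a + blinfun_apply v d) \<le> c} = {}"
  | "{v. ereal (a + blinfun_apply v d) \<le> c} = UNIV"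
  | b where "{v. ereal (a + blinfun_apply v d) \<le> c} = {v. blinfun_apply v d \<le> b - a}"
  by (cases c) (auto simp: algebra_simps)

lemma convex_halfspace_blinfun: "convex {v :: 'a::real_normed_vector \<Rightarrow>\<^sub>L real. blinfun_apply v d \<le> b}"
proof -
  have "linear (\<lambda>v :: 'a \<Rightarrow>\<^sub>L real. blinfun_apply v d)"
    by (rule linearI) (simp_all add: blinfun.add_left blinfun.scaleR_left)
  then have "convex ((\<lambda>v :: 'a \<Rightarrow>\<^sub>L real. blinfun_apply v d) -` {..b})"
    by (rule convex_linear_vimage) (simp add: convex_real_interval)
  then show ?thesis
    by (simp add: vimage_def)
qed

lemma closedin_weak_star_halfspace: "closedin weak_star_topology {v. blinfun_apply v d \<le> b}"
proof -
  have "UNIV - {v. blinfun_apply v d \<le> b} = {v. blinfun_apply v d \<in> {b<..}}"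
    by auto
  then show ?thesis
    using openin_weak_star_evaluation[of "{b<..}" d]
    unfolding closedin_def topspace_weak_star_topology by auto
qed

lemma convex_subdiff: "convex (subdiff f x)"
proof (cases "f x")
  case (real a)
  have "convex {v. ereal (a + blinfun_apply v (y - x)) \<le> f y}" for y
    by (cases rule: subgradient_constraint_cases[of a "y - x" "f y"])
      (simp_all add: convex_halfspace_blinfun)
  then show ?thesis
    unfolding subdiff_eq_INT[of f x a, OF real] by (intro convex_INT) auto
qed (auto simp: subdiff_def)

lemma closedin_weak_star_subdiff: "closedin weak_star_topology (subdiff f x)"
proof (cases "f x")
  case (real a)
  have "closedin weak_star_topology {v. ereal (a + blinfun_apply v (y - x)) \<le> f y}" for y
    by (cases rule: subgradient_constraint_cases[of a "y - x" "f y"])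
      (simp_all add: closedin_weak_star_halfspace
        closedin_topspace[of weak_star_topology, unfolded topspace_weak_star_topology])
  then show ?thesis
    unfolding subdiff_eq_INT[of f x a, OF real] by (intro closedin_Inter) auto
qed (auto simp: subdiff_def)

lemma weak_star_closed_convex_hull_subset_subdiff:
  "S \<subseteq> subdiff f x \<Longrightarrow> weak_star_closed_convex_hull S \<subseteq> subdiff f x"
  unfolding weak_star_closed_convex_hull_def
  using convex_subdiff closedin_weak_star_subdiff by blast

lemma subdiff_add_normal_cone:
  assumes a: "a \<in> subdiff f x" and b: "b \<in> normal_cone (edom f) x"
  shows "a + b \<in> subdiff f x"
proof -
  obtain e where e: "f x = ereal e" "\<And>y. ereal (e + blinfun_apply a (y - x)) \<le> f y"
    using subdiffE[OF a] by blast
  show ?thesis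
  proof (rule subdiffI[of f x e, OF e(1)])
    fix y
    show "ereal (e + blinfun_apply (a + b) (y - x)) \<le> f y"
    proof (cases "y \<in> edom f")
      case True
      with b have "blinfun_apply b (y - x) \<le> 0"
        by (auto simp: normal_cone_def)
      then show ?thesis
        using e(2)[of y] by (simp add: blinfun.add_left) (metis add.assoc add_le_same_cancel1 ereal_less_eq(3) order_trans)
    qed (simp add: edom_iff)
  qed
qed

lemma subdiff_subset_edom_fconj:
  assumes "v \<in> subdiff f x"
  shows "v \<in> edom (fconj f)"
proof -
  obtain a where a: "f x = ereal a" "\<And>y. ereal (a + blinfun_apply v (y - x)) \<le> f y"
    using subdiffE[OF assms] by blast
  have "fconj f v \<le> ereal (blinfun_apply v x - a)"
  proof (rule fconj_le)
    fix y
    show "ereal (blinfun_apply v y) - f y \<le> ereal (blinfun_apply v x - a)"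
      using a(2)[of y] by (cases "f y") (auto simp: blinfun.diff_right)
  qed
  then show ?thesis
    by (auto simp: edom_def)
qed

text \<open>The points at which \<open>w\<close> is a subgradient are the minimisers of \<open>f - w\<close>, a closed
  convex sublevel set.\<close>

lemma subdiff_closure_convex_hull:
  assumes cv: "convex_fun f" and lsc: "lsc_fun f" and z0: "z0 \<in> Z"
    and Z: "\<And>z. z \<in> Z \<Longrightarrow> w \<in> subdiff f z" and xh: "xh \<in> closure (convex hull Z)"
  shows "w \<in> subdiff f xh"
proof -
  obtain e0 where e0: "f z0 = ereal e0" "\<And>y. ereal (e0 + blinfun_apply w (y - z0)) \<le> f y"
    using subdiffE[OF Z[OF z0]] by blast
  define c where "c = e0 - blinfun_apply w z0"
  have "c + blinfun_apply w y = e0 + blinfun_apply w (y - z0)" for y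
    by (simp add: c_def blinfun.diff_right)
  then have below: "ereal (c + blinfun_apply w y) \<le> f y" for y
    using e0(2)[of y] by simp
  have "Z \<subseteq> {y. f y \<le> ereal (c + blinfun_apply w y)}"
  proof
    fix z assume "z \<in> Z"
    then obtain e where e: "f z = ereal e" "\<And>y. ereal (e + blinfun_apply w (y - z)) \<le> f y"
      using subdiffE[OF Z] by blast
    with e0(1) have "e \<le> c + blinfun_apply w z"
      using e(2)[of z0] by (simp add: c_def blinfun.diff_right)
    with e(1) show "z \<in> {y. f y \<le> ereal (c + blinfun_apply w y)}"
      by simp
  qed
  then have "closure (convex hull Z) \<subseteq> {y. f y \<le> ereal (c + blinfun_apply w y)}"
    by (intro closure_minimal hull_minimal convex_affine_sublevel[OF cv] closed_affine_sublevel[OF lsc])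
  with xh below[of xh] have "f xh = ereal (c + blinfun_apply w xh)"
    by (auto intro: antisym)
  then show ?thesis
  proof (rule subdiffI)
    fix y
    have "c + blinfun_apply w xh + blinfun_apply w (y - xh) = c + blinfun_apply w y"
      by (simp add: blinfun.diff_right)
    with below[of y] show "ereal (c + blinfun_apply w xh + blinfun_apply w (y - xh)) \<le> f y"
      by (simp add: add.assoc)
  qed
qed

section \<open>Interior subgradients at the gradients of the conjugate\<close>

lemma fitzpatrick_subdiff_approx:
  assumes "fitzpatrick_subdiff f x u = ereal c"
  obtains Y W where "\<And>n. W n \<in> subdiff f (Y n)"
    "\<And>n. c - 1 / real (Suc n) <
      blinfun_apply u (Y n) + blinfun_apply (W n) x - blinfun_apply (W n) (Y n)"
proof -
  have "\<exists>p\<in>subdiff_graph f. c - 1 / real (Suc n) <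
      blinfun_apply u (fst p) + blinfun_apply (snd p) x - blinfun_apply (snd p) (fst p)" for n
  proof -
    have "ereal (c - 1 / real (Suc n)) < fitzpatrick_subdiff f x u"
      using assms by simp
    then show ?thesis
      unfolding fitzpatrick_subdiff_def by (simp add: less_SUP_iff)
  qed
  then obtain P where "\<And>n. P n \<in> subdiff_graph f" "\<And>n. c - 1 / real (Suc n) <
      blinfun_apply u (fst (P n)) + blinfun_apply (snd (P n)) x - blinfun_apply (snd (P n)) (fst (P n))"
    by metis
  moreover have "snd (P n) \<in> subdiff f (fst (P n))" if "P n \<in> subdiff_graph f" for n
    using that by (auto simp: subdiff_graph_def split: prod.splits)
  ultimately show ?thesis
    using that[of "snd \<circ> P" "fst \<circ> P"] by simp
qed

lemma subdiff_transfer_along_segment: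
  assumes w: "w \<in> subdiff f x" and fx: "f x = ereal a" and fz: "f z = ereal b" and fx': "f x' = ereal b'"
    and l: "0 < l" "l < 1" and x: "(1 - l) *\<^sub>R z + l *\<^sub>R x' = x"
    and chord: "(1 - l) * b + l * b' \<le> a"
  shows "w \<in> subdiff f z"
proof -
  have sub: "ereal (a + blinfun_apply w (y - x)) \<le> f y" for y
    using subdiffE[OF w] fx by (metis ereal.inject)
  have gz: "0 \<le> b - a - blinfun_apply w (z - x)" and gx': "0 \<le> b' - a - blinfun_apply w (x' - x)"
    using sub[of z] sub[of x'] fz fx' by simp_all
  have "(1 - l) *\<^sub>R (z - x) + l *\<^sub>R (x' - x) = 0"
    using x by (simp add: algebra_simps)
  then have "(1 - l) * blinfun_apply w (z - x) + l * blinfun_apply w (x' - x) = 0"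
    by (metis blinfun.add_right blinfun.scaleR_right blinfun.zero_right real_scaleR_def)
  with chord have "(1 - l) * (b - a - blinfun_apply w (z - x)) + l * (b' - a - blinfun_apply w (x' - x)) \<le> 0"
    by (simp add: algebra_simps)
  with gx' l have "(1 - l) * (b - a - blinfun_apply w (z - x)) \<le> 0"
    by (smt (verit) mult_nonneg_nonneg)
  with l have "b \<le> a + blinfun_apply w (z - x)"
    by (simp add: mult_le_0_iff)
  show ?thesis
  proof (rule subdiffI[of f z b, OF fz])
    fix y
    have "b + blinfun_apply w (y - z) \<le> a + blinfun_apply w (y - x)"
      using \<open>b \<le> a + blinfun_apply w (z - x)\<close> by (simp add: blinfun.diff_right)
    then show "ereal (b + blinfun_apply w (y - z)) \<le> f y"
      using sub[of y] by (meson ereal_less_eq(3) order_trans)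
  qed
qed

text \<open>The affine minorants given by \<open>W n\<close> at \<open>Y n\<close> become exact at \<open>x'\<close>; evaluated at points
  \<open>X n\<close> converging to \<open>x\<close>, where \<open>f\<close> is upper semicontinuous, they bound the chord through
  \<open>z\<close> and \<open>x'\<close> by \<open>f x\<close>.\<close>

lemma chord_le_of_tight_subgradients:
  fixes f :: "'a::real_normed_vector \<Rightarrow> ereal"
  assumes cv: "convex_fun f" and lsc: "lsc_fun f"
    and \<rho>: "0 < \<rho>" and M: "\<forall>y\<in>ball x \<rho>. f y \<le> ereal M" and fx: "f x = ereal a"
    and W: "\<And>n. W n \<in> subdiff f (Y n)" and fy: "\<And>n. f (Y n) = ereal (fy n)"
    and Y: "Y \<longlonglongrightarrow> z" and fz: "f z = ereal b" and fx': "f x' = ereal b'"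
    and tight: "(\<lambda>n. b' - fy n - blinfun_apply (W n) (x' - Y n)) \<longlonglongrightarrow> 0"
    and l: "0 < l" "l < 1" and x: "(1 - l) *\<^sub>R z + l *\<^sub>R x' = x"
  shows "(1 - l) * b + l * b' \<le> a"
proof (rule field_le_epsilon)
  fix \<epsilon> :: real assume "0 < \<epsilon>"
  define B where "B n = b' - fy n - blinfun_apply (W n) (x' - Y n)" for n
  define X where "X n = (1 - l) *\<^sub>R Y n + l *\<^sub>R x'" for n
  obtain \<delta> where \<delta>: "0 < \<delta>" "\<And>y. norm (y - x) < \<delta> \<Longrightarrow> f y \<le> ereal (a + \<epsilon>)"
    using convex_fun_upper_semicontinuous_at[OF cv \<rho> M fx \<open>0 < \<epsilon>\<close>] by blast
  have "X \<longlonglongrightarrow> (1 - l) *\<^sub>R z + l *\<^sub>R x'"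
    unfolding X_def using Y by (intro tendsto_intros)
  then have "\<forall>\<^sub>F n in sequentially. norm (X n - x) < \<delta>"
    using \<delta>(1) x unfolding LIMSEQ_iff by (auto simp: eventually_sequentially)
  then have "\<forall>\<^sub>F n in sequentially. f (Y n) \<le> ereal ((a + \<epsilon> - l * b' + l * B n) / (1 - l))"
  proof (rule eventually_mono)
    fix n assume "norm (X n - x) < \<delta>"
    then have "f (X n) \<le> ereal (a + \<epsilon>)"
      by (rule \<delta>(2))
    moreover have "ereal ((1 - l) * fy n + l * b' - l * B n) \<le> f (X n)"
    proof -
      obtain c where c: "f (Y n) = ereal c" "\<And>y. ereal (c + blinfun_apply (W n) (y - Y n)) \<le> f y"
        using subdiffE[OF W[of n]] by blast
      have "c + blinfun_apply (W n) (X n - Y n) = (1 - l) * fy n + l * b' - l * B n"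
        using c(1) fy[of n]
        by (simp add: X_def B_def blinfun.add_right blinfun.diff_right blinfun.scaleR_right algebra_simps)
      then show ?thesis
        using c(2)[of "X n"] by simp
    qed
    ultimately have "ereal ((1 - l) * fy n + l * b' - l * B n) \<le> ereal (a + \<epsilon>)"
      by (rule order_trans[rotated])
    then have "(1 - l) * fy n \<le> a + \<epsilon> - l * b' + l * B n"
      by simp
    with l fy[of n] show "f (Y n) \<le> ereal ((a + \<epsilon> - l * b' + l * B n) / (1 - l))"
      by (simp add: le_divide_eq mult.commute)
  qed
  moreover have "(\<lambda>n. (a + \<epsilon> - l * b' + l * B n) / (1 - l)) \<longlonglongrightarrow> (a + \<epsilon> - l * b' + l * 0) / (1 - l)"
    using tight l unfolding B_def[symmetric] by (intro tendsto_intros) auto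
  ultimately have "f z \<le> ereal ((a + \<epsilon> - l * b' + l * 0) / (1 - l))"
    by (intro lsc_fun_LIMSEQ[OF lsc Y])
  with fz l show "(1 - l) * b + l * b' \<le> a + \<epsilon>"
    by (simp add: le_divide_eq mult.commute)
qed

lemma interior_segment_extension:
  fixes C :: "'a::real_normed_vector set"
  assumes x: "x \<in> interior C" and xz: "x \<noteq> z"
  obtains x' l where "x' \<in> C" "0 < l" "l < 1" "(1 - l) *\<^sub>R z + l *\<^sub>R x' = x"
proof -
  obtain r where r: "0 < r" "ball x r \<subseteq> C"
    using x by (meson open_contains_ball_eq open_interior interior_subset subset_trans)
  define s where "s = r / (2 * norm (x - z))"
  define x' where "x' = x + s *\<^sub>R (x - z)"
  define l where "l = 1 / (1 + s)"
  have s: "0 < s"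
    using r xz by (simp add: s_def)
  then have l: "0 < l" "l < 1"
    by (simp_all add: l_def)
  have "norm (x' - x) < r"
    using r xz by (simp add: x'_def s_def)
  then have "x' \<in> C"
    using r by (auto simp: dist_norm norm_minus_commute)
  moreover have "(1 + s) *\<^sub>R ((1 - l) *\<^sub>R z + l *\<^sub>R x') = (1 + s) *\<^sub>R x"
    using s by (simp add: l_def x'_def field_simps algebra_simps)
  then have "(1 - l) *\<^sub>R z + l *\<^sub>R x' = x"
    using s by simp
  ultimately show ?thesis
    using that l by blast
qed

lemma fitzpatrick_tight_sequence:
  assumes fitz: "fitzpatrick_subdiff f x' u = ereal (b' + F)"
    and F: "fconj f u = ereal F" and fx': "f x' = ereal b'"
  obtains Y W fy where "\<And>n. W n \<in> subdiff f (Y n)" "\<And>n. f (Y n) = ereal (fy n)"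
    "(\<lambda>n. F - (blinfun_apply u (Y n) - fy n)) \<longlonglongrightarrow> 0"
    "(\<lambda>n. b' - fy n - blinfun_apply (W n) (x' - Y n)) \<longlonglongrightarrow> 0"
proof -
  obtain W Y where W: "\<And>n. W n \<in> subdiff f (Y n)"
    and approx: "\<And>n. b' + F - 1 / real (Suc n) <
      blinfun_apply u (Y n) + blinfun_apply (W n) x' - blinfun_apply (W n) (Y n)"
    by (rule fitzpatrick_subdiff_approx[OF fitz]) blast
  define fy where "fy n = real_of_ereal (f (Y n))" for n
  have fy: "f (Y n) = ereal (fy n)" and
    minorant: "\<And>y. ereal (fy n + blinfun_apply (W n) (y - Y n)) \<le> f y" for n
    using subdiffE[OF W[of n]] unfolding fy_def by (metis real_of_ereal.simps(1))+
  define A where "A n = F - (blinfun_apply u (Y n) - fy n)" for n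
  define B where "B n = b' - fy n - blinfun_apply (W n) (x' - Y n)" for n
  have A0: "0 \<le> A n" and B0: "0 \<le> B n" and AB: "A n + B n < 1 / real (Suc n)" for n
    using fconj_ge_real[of f "Y n" "fy n" u, OF fy] F minorant[of n x'] fx' approx[of n]
    by (simp_all add: A_def B_def blinfun.diff_right)
  have A1: "A n \<le> 1 / real (Suc n)" and B1: "B n \<le> 1 / real (Suc n)" for n
    using A0[of n] B0[of n] AB[of n] by linarith+
  have "A \<longlonglongrightarrow> 0" "B \<longlonglongrightarrow> 0"
    using LIMSEQ_le_inverse_Suc[OF A0 A1] LIMSEQ_le_inverse_Suc[OF B0 B1] .
  then show ?thesis
    unfolding A_def[abs_def] B_def[abs_def] by (rule that[OF W fy])
qed

text \<open>The Fitzpatrick hypothesis at \<open>(x', u)\<close>, with \<open>x'\<close> beyond \<open>x\<close> on the ray from \<open>z\<close>,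
  yields pairs \<open>(Y n, W n)\<close> of the subdifferential that are nearly maximizing for \<open>f*\<close> at
  \<open>u\<close> (so \<open>Y n \<longrightarrow> z\<close> by Smulian) and whose affine minorants are nearly exact at \<open>x'\<close>.\<close>

lemma subdiff_interior_subset_subdiff_conj_gradient:
  fixes f :: "'a::banach \<Rightarrow> ereal"
  assumes pr: "proper_fun f" and cv: "convex_fun f" and lsc: "lsc_fun f"
    and fitz: "\<And>x v. x \<in> edom f \<Longrightarrow> v \<in> edom (fconj f) \<Longrightarrow>
      fitzpatrick_subdiff f x v = f x + fconj f v"
    and x: "x \<in> interior (edom f)" and D: "conj_frechet_deriv f u z"
  shows "subdiff f x \<subseteq> subdiff f z"
proof
  fix w assume w: "w \<in> subdiff f x"
  show "w \<in> subdiff f z"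
  proof (cases "x = z")
    case True
    with w show ?thesis by simp
  next
    case False
    obtain x' l where x': "x' \<in> edom f" and l: "0 < l" "l < 1" and xl: "(1 - l) *\<^sub>R z + l *\<^sub>R x' = x"
      using interior_segment_extension[OF x False] by blast
    obtain a where fx: "f x = ereal a"
      using subdiffE[OF w] by blast
    obtain b where fz: "f z = ereal b"
      using subdiffE[OF conj_frechet_deriv_subdiff[OF lsc D]] by blast
    obtain b' where fx': "f x' = ereal b'"
      using proper_fun_edomE[OF pr x'] by blast
    obtain F where F: "fconj f u = ereal F"
      using conj_frechet_deriv_fconj_real[OF D] .
    obtain \<rho> M where \<rho>: "0 < \<rho>" "\<forall>y\<in>ball x \<rho>. f y \<le> ereal M"
      using convex_fun_locally_bounded_above[OF pr cv lsc x] by blast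
    have "fitzpatrick_subdiff f x' u = ereal (b' + F)"
      using fitz[OF x'] F fx' by (simp add: edom_def)
    then obtain W Y fy where W: "\<And>n. W n \<in> subdiff f (Y n)" and fy: "\<And>n. f (Y n) = ereal (fy n)"
      and gap: "(\<lambda>n. F - (blinfun_apply u (Y n) - fy n)) \<longlonglongrightarrow> 0"
      and tight: "(\<lambda>n. b' - fy n - blinfun_apply (W n) (x' - Y n)) \<longlonglongrightarrow> 0"
      by (rule fitzpatrick_tight_sequence[OF _ F fx']) blast
    have "Y \<longlonglongrightarrow> z"
      using smulian_maximizing_sequence[OF D fy] gap F by simp
    then have "(1 - l) * b + l * b' \<le> a"
      by (rule chord_le_of_tight_subgradients[OF cv lsc \<rho> fx W fy _ fz fx' tight l xl])
    then show ?thesis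
      by (rule subdiff_transfer_along_segment[OF w fx fz fx' l xl])
  qed
qed

lemma subdiff_interior_subset_subdiff_hull:
  fixes f :: "'a::banach \<Rightarrow> ereal"
  assumes pr: "proper_fun f" and cv: "convex_fun f" and lsc: "lsc_fun f"
    and fitz: "\<And>x v. x \<in> edom f \<Longrightarrow> v \<in> edom (fconj f) \<Longrightarrow>
      fitzpatrick_subdiff f x v = f x + fconj f v"
    and x: "x \<in> interior (edom f)" and xh: "xh \<in> closure (convex hull (im_Dconj f))"
  shows "subdiff f x \<subseteq> subdiff f xh"
proof
  fix w assume "w \<in> subdiff f x"
  then have "w \<in> subdiff f z" if "z \<in> im_Dconj f" for z
    using that subdiff_interior_subset_subdiff_conj_gradient[OF pr cv lsc fitz x]
    by (auto simp: im_Dconj_def)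
  moreover obtain z0 where "z0 \<in> im_Dconj f"
    using xh by fastforce
  ultimately show "w \<in> subdiff f xh"
    using subdiff_closure_convex_hull[OF cv lsc _ _ xh] by blast
qed

section \<open>Decomposition of the subdifferential\<close>

definition support_dom :: "('a::real_normed_vector \<Rightarrow>\<^sub>L real) set \<Rightarrow> 'a set" where
  "support_dom S = {d. bdd_above ((\<lambda>w. blinfun_apply w d) ` S)}"

definition support_fun :: "('a::real_normed_vector \<Rightarrow>\<^sub>L real) set \<Rightarrow> 'a \<Rightarrow> real" where
  "support_fun S d = (SUP w\<in>S. blinfun_apply w d)"

lemma support_fun_upper:
  "d \<in> support_dom S \<Longrightarrow> w \<in> S \<Longrightarrow> blinfun_apply w d \<le> support_fun S d"
  using cSUP_upper[of w S "\<lambda>w. blinfun_apply w d"] unfolding support_dom_def support_fun_def by simp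

lemma support_fun_least:
  assumes "S \<noteq> {}" "\<And>w. w \<in> S \<Longrightarrow> blinfun_apply w d \<le> c"
  shows "d \<in> support_dom S" "support_fun S d \<le> c"
  using assms bdd_aboveI2[of S "\<lambda>w. blinfun_apply w d" c] unfolding support_dom_def support_fun_def
  by (auto intro: cSUP_least)

lemma support_fun_add:
  assumes "S \<noteq> {}" "d1 \<in> support_dom S" "d2 \<in> support_dom S"
  shows "d1 + d2 \<in> support_dom S \<and> support_fun S (d1 + d2) \<le> support_fun S d1 + support_fun S d2"
  using support_fun_least[OF assms(1), of "d1 + d2" "support_fun S d1 + support_fun S d2"]
    support_fun_upper[OF assms(2)] support_fun_upper[OF assms(3)]
  by (simp add: add_mono blinfun.add_right)

lemma support_fun_scaleR:
  assumes S: "S \<noteq> {}" and d: "d \<in> support_dom S" and c: "0 \<le> c"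
  shows "c *\<^sub>R d \<in> support_dom S \<and> support_fun S (c *\<^sub>R d) = c * support_fun S d"
proof -
  have le: "c *\<^sub>R d \<in> support_dom S" "support_fun S (c *\<^sub>R d) \<le> c * support_fun S d"
    using support_fun_least[OF S, of "c *\<^sub>R d" "c * support_fun S d"] support_fun_upper[OF d] c
    by (simp_all add: blinfun.scaleR_right mult_left_mono)
  moreover have "c * support_fun S d \<le> support_fun S (c *\<^sub>R d)"
  proof (cases "c = 0")
    case True
    obtain w where "w \<in> S" using S by blast
    with support_fun_upper[OF le(1) this] True show ?thesis by simp
  next
    case False
    with c have "0 < c" by simp
    have "support_fun S d \<le> support_fun S (c *\<^sub>R d) / c"
      using support_fun_upper[OF le(1)] \<open>0 < c\<close>
      by (intro support_fun_least[OF S]) (simp add: blinfun.scaleR_right pos_le_divide_eq mult.commute)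
    with \<open>0 < c\<close> show ?thesis
      by (simp add: pos_le_divide_eq mult.commute)
  qed
  ultimately show ?thesis by simp
qed

definition sandwich_inf ::
    "('a::real_normed_vector \<Rightarrow> real) \<Rightarrow> 'a set \<Rightarrow> 'a set \<Rightarrow> ('a \<Rightarrow>\<^sub>L real) \<Rightarrow> 'a \<Rightarrow> real" where
  "sandwich_inf \<sigma> D P v d = (INF e\<in>{e\<in>P. d + e \<in> D}. \<sigma> (d + e) - blinfun_apply v e)"

context
  fixes \<sigma> :: "'a::real_normed_vector \<Rightarrow> real" and D P :: "'a set" and v :: "'a \<Rightarrow>\<^sub>L real"
    and K :: real
  assumes D_add: "\<And>d1 d2. d1 \<in> D \<Longrightarrow> d2 \<in> D \<Longrightarrow> d1 + d2 \<in> D \<and> \<sigma> (d1 + d2) \<le> \<sigma> d1 + \<sigma> d2"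
    and D_scaleR: "\<And>c d. d \<in> D \<Longrightarrow> 0 \<le> c \<Longrightarrow> c *\<^sub>R d \<in> D \<and> \<sigma> (c *\<^sub>R d) = c * \<sigma> d"
    and P_add: "\<And>e1 e2. e1 \<in> P \<Longrightarrow> e2 \<in> P \<Longrightarrow> e1 + e2 \<in> P"
    and P_scaleR: "\<And>c e. e \<in> P \<Longrightarrow> 0 \<le> c \<Longrightarrow> c *\<^sub>R e \<in> P"
    and P_below: "\<And>e. e \<in> P \<Longrightarrow> e \<in> D \<and> blinfun_apply v e \<le> \<sigma> e"
    and absorbing: "\<And>d. \<exists>e\<in>P. d + e \<in> D \<and> \<sigma> (d + e) - blinfun_apply v e \<le> K * norm d"
begin

lemma sandwich_zero: "0 \<in> P" "0 \<in> D" "\<sigma> 0 = 0"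
proof -
  obtain e where "e \<in> P"
    using absorbing by blast
  then show "0 \<in> P"
    using P_scaleR[of e 0] by simp
  then show "0 \<in> D" "\<sigma> 0 = 0"
    using P_below D_scaleR[of 0 0] by auto
qed

lemma sandwich_inf_le:
  assumes "e \<in> P" "d + e \<in> D"
  shows "sandwich_inf \<sigma> D P v d \<le> \<sigma> (d + e) - blinfun_apply v e"
  unfolding sandwich_inf_def
proof (rule cINF_lower)
  obtain e' where e': "e' \<in> P" "- d + e' \<in> D"
    using absorbing by blast
  show "bdd_below ((\<lambda>e. \<sigma> (d + e) - blinfun_apply v e) ` {e \<in> P. d + e \<in> D})"
  proof (rule bdd_belowI2)
    fix e assume e: "e \<in> {e \<in> P. d + e \<in> D}"
    have "\<sigma> ((d + e) + (- d + e')) \<le> \<sigma> (d + e) + \<sigma> (- d + e')"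
      using D_add e e' by blast
    moreover have "blinfun_apply v (e + e') \<le> \<sigma> (e + e')"
      using P_below P_add e e' by blast
    ultimately show "blinfun_apply v e' - \<sigma> (- d + e') \<le> \<sigma> (d + e) - blinfun_apply v e"
      by (simp add: blinfun.add_right add.assoc)
  qed
qed (use assms in simp)

lemma sandwich_inf_ge:
  assumes "\<And>e. e \<in> P \<Longrightarrow> d + e \<in> D \<Longrightarrow> c \<le> \<sigma> (d + e) - blinfun_apply v e"
  shows "c \<le> sandwich_inf \<sigma> D P v d"
  unfolding sandwich_inf_def using assms absorbing[of d] by (intro cINF_greatest) auto

lemma sublinear_sandwich_inf: "sublinear (sandwich_inf \<sigma> D P v)"
proof (rule sublinearI)
  fix d1 d2
  have "sandwich_inf \<sigma> D P v (d1 + d2) \<le> (\<sigma> (d1 + e1) - blinfun_apply v e1) + (\<sigma> (d2 + e2) - blinfun_apply v e2)"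
    if e1: "e1 \<in> P" "d1 + e1 \<in> D" and e2: "e2 \<in> P" "d2 + e2 \<in> D" for e1 e2
  proof -
    have eq: "(d1 + d2) + (e1 + e2) = (d1 + e1) + (d2 + e2)"
      by (simp add: algebra_simps)
    have "sandwich_inf \<sigma> D P v (d1 + d2) \<le> \<sigma> ((d1 + e1) + (d2 + e2)) - blinfun_apply v (e1 + e2)"
      using sandwich_inf_le[of "e1 + e2" "d1 + d2"] P_add[OF e1(1) e2(1)] D_add[OF e1(2) e2(2)]
      unfolding eq by blast
    with D_add[OF e1(2) e2(2)] show ?thesis
      by (simp add: blinfun.add_right)
  qed
  then have "sandwich_inf \<sigma> D P v (d1 + d2) - (\<sigma> (d2 + e2) - blinfun_apply v e2) \<le> sandwich_inf \<sigma> D P v d1"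
    if "e2 \<in> P" "d2 + e2 \<in> D" for e2
    using that by (intro sandwich_inf_ge) force
  then have "sandwich_inf \<sigma> D P v (d1 + d2) - sandwich_inf \<sigma> D P v d1 \<le> sandwich_inf \<sigma> D P v d2"
    by (intro sandwich_inf_ge) force
  then show "sandwich_inf \<sigma> D P v (d1 + d2) \<le> sandwich_inf \<sigma> D P v d1 + sandwich_inf \<sigma> D P v d2"
    by simp
next
  show "sandwich_inf \<sigma> D P v 0 \<le> 0"
    using sandwich_inf_le[of 0 0] sandwich_zero by simp
next
  fix c :: real and d assume c: "0 < c"
  have "sandwich_inf \<sigma> D P v (c *\<^sub>R d) / c \<le> \<sigma> (d + e) - blinfun_apply v e"
    if e: "e \<in> P" "d + e \<in> D" for e
  proof -
    have "c *\<^sub>R d + c *\<^sub>R e = c *\<^sub>R (d + e)"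
      by (simp add: scaleR_add_right)
    then have "sandwich_inf \<sigma> D P v (c *\<^sub>R d) \<le> \<sigma> (c *\<^sub>R (d + e)) - blinfun_apply v (c *\<^sub>R e)"
      using sandwich_inf_le[of "c *\<^sub>R e" "c *\<^sub>R d"] P_scaleR[OF e(1)] D_scaleR[OF e(2)] c by simp
    also have "\<dots> = c * (\<sigma> (d + e) - blinfun_apply v e)"
      using D_scaleR[OF e(2)] c by (simp add: blinfun.scaleR_right right_diff_distrib)
    finally show ?thesis
      using c by (simp add: pos_divide_le_eq mult.commute)
  qed
  then have "sandwich_inf \<sigma> D P v (c *\<^sub>R d) / c \<le> sandwich_inf \<sigma> D P v d"
    by (rule sandwich_inf_ge)
  with c show "sandwich_inf \<sigma> D P v (c *\<^sub>R d) \<le> c * sandwich_inf \<sigma> D P v d"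
    by (simp add: pos_divide_le_eq mult.commute)
qed

lemma hahn_banach_sandwich:
  "\<exists>a. (\<forall>d\<in>D. blinfun_apply a d \<le> \<sigma> d) \<and> (\<forall>e\<in>P. blinfun_apply v e \<le> blinfun_apply a e)"
proof -
  have "sandwich_inf \<sigma> D P v d \<le> K * norm d" for d
    using absorbing[of d] sandwich_inf_le by force
  then obtain a where a: "\<And>d. blinfun_apply a d \<le> sandwich_inf \<sigma> D P v d"
    using hahn_banach_blinfun[OF sublinear_sandwich_inf] by blast
  have "blinfun_apply a d \<le> \<sigma> d" if "d \<in> D" for d
    using a[of d] sandwich_inf_le[of 0 d] sandwich_zero that by simp
  moreover have "blinfun_apply v e \<le> blinfun_apply a e" if "e \<in> P" for e
    using a[of "- e"] sandwich_inf_le[of e "- e"] sandwich_zero that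
    by (simp add: blinfun.minus_right)
  ultimately show ?thesis by blast
qed

end

definition cone_from :: "'a::real_vector set \<Rightarrow> 'a \<Rightarrow> 'a set" where
  "cone_from U x = {t *\<^sub>R (y - x) | t y. 0 \<le> t \<and> y \<in> U}"

lemma cone_from_scaleR: "e \<in> cone_from U x \<Longrightarrow> 0 \<le> c \<Longrightarrow> c *\<^sub>R e \<in> cone_from U x"
  unfolding cone_from_def by (force intro: mult_nonneg_nonneg)

lemma cone_from_add:
  assumes U: "convex U" and e1: "e1 \<in> cone_from U x" and e2: "e2 \<in> cone_from U x"
  shows "e1 + e2 \<in> cone_from U x"
proof -
  obtain t1 y1 t2 y2 where 1: "e1 = t1 *\<^sub>R (y1 - x)" "0 \<le> t1" "y1 \<in> U"
    and 2: "e2 = t2 *\<^sub>R (y2 - x)" "0 \<le> t2" "y2 \<in> U"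
    using e1 e2 unfolding cone_from_def by blast
  show ?thesis
  proof (cases "t1 + t2 = 0")
    case True
    with 1(2) 2(2) have "t1 = 0" "t2 = 0"
      by linarith+
    with 1 2 have "e1 + e2 = 0 *\<^sub>R (y1 - x)"
      by simp
    with 1(3) show ?thesis
      unfolding cone_from_def by blast
  next
    case False
    with 1 2 have T: "0 < t1 + t2" by simp
    define y where "y = (t1 / (t1 + t2)) *\<^sub>R y1 + (t2 / (t1 + t2)) *\<^sub>R y2"
    have "y \<in> U"
      unfolding y_def using 1 2 T by (intro convexD[OF U]) (simp_all add: add_divide_distrib[symmetric])
    have "(t1 + t2) *\<^sub>R y = t1 *\<^sub>R y1 + t2 *\<^sub>R y2"
      using T by (simp add: y_def scaleR_add_right)
    then have "e1 + e2 = (t1 + t2) *\<^sub>R (y - x)"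
      by (simp add: 1(1) 2(1) scaleR_diff_right algebra_simps)
    with T \<open>y \<in> U\<close> show ?thesis
      unfolding cone_from_def by (intro CollectI exI conjI) auto
  qed
qed

lemma convex_segment_in_interior:
  fixes C :: "'a::real_normed_vector set"
  assumes C: "convex C" and x1: "x1 \<in> interior C" and y: "y \<in> C" and t: "0 < t" "t \<le> 1"
  shows "y + t *\<^sub>R (x1 - y) \<in> interior C"
proof -
  obtain r where r: "0 < r" "ball x1 r \<subseteq> C"
    using x1 by (meson open_contains_ball_eq open_interior interior_subset subset_trans)
  have "ball (y + t *\<^sub>R (x1 - y)) (t * r) \<subseteq> C"
  proof
    fix q assume "q \<in> ball (y + t *\<^sub>R (x1 - y)) (t * r)"
    define w where "w = q - (y + t *\<^sub>R (x1 - y))"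
    have "norm w < t * r"
      using \<open>q \<in> _\<close> by (simp add: w_def dist_norm norm_minus_commute)
    have "norm (inverse t *\<^sub>R w) = norm w / t"
      using t by (simp add: divide_inverse_commute)
    also have "\<dots> < r"
      using \<open>norm w < t * r\<close> t by (simp add: pos_divide_less_eq mult.commute)
    finally have "norm (inverse t *\<^sub>R w) < r" .
    then have "x1 + inverse t *\<^sub>R w \<in> C"
      using r by (auto simp: dist_norm)
    then have "(1 - t) *\<^sub>R y + t *\<^sub>R (x1 + inverse t *\<^sub>R w) \<in> C"
      using t y by (intro convexD_alt[OF C]) auto
    then show "q \<in> C"
      using t by (simp add: w_def scaleR_add_right algebra_simps)
  qed
  then show ?thesis
    using r t by (meson centre_in_ball interior_maximal mult_pos_pos open_ball subsetD)
qed

lemma normal_cone_if_interior: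
  fixes C :: "'a::real_normed_vector set"
  assumes C: "convex C" "interior C \<noteq> {}" and xh: "xh \<in> C"
    and g: "\<And>y. y \<in> interior C \<Longrightarrow> blinfun_apply g (y - xh) \<le> 0"
  shows "g \<in> normal_cone C xh"
  unfolding normal_cone_def
proof (intro CollectI conjI ballI xh)
  fix y assume y: "y \<in> C"
  obtain x1 where x1: "x1 \<in> interior C"
    using C(2) by blast
  have "((\<lambda>t. blinfun_apply g (y - xh) + t * blinfun_apply g (x1 - y)) \<longlongrightarrow>
      blinfun_apply g (y - xh) + 0 * blinfun_apply g (x1 - y)) (at_right 0)"
    by (intro tendsto_intros)
  moreover have "\<forall>\<^sub>F t in at_right 0. blinfun_apply g (y - xh) + t * blinfun_apply g (x1 - y) \<le> 0"
  proof (rule eventually_mono[OF eventually_at_right_real[of 0 1]])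
    fix t :: real assume "t \<in> {0<..<1}"
    then have "blinfun_apply g (y + t *\<^sub>R (x1 - y) - xh) \<le> 0"
      using g convex_segment_in_interior[OF C(1) x1 y] by simp
    then show "blinfun_apply g (y - xh) + t * blinfun_apply g (x1 - y) \<le> 0"
      by (simp add: blinfun.add_right blinfun.diff_right blinfun.scaleR_right algebra_simps)
  qed simp
  ultimately show "blinfun_apply g (y - xh) \<le> 0"
    using tendsto_upperbound by fastforce
qed

lemma cone_from_absorbing:
  fixes \<sigma> :: "'a::real_normed_vector \<Rightarrow> real" and v :: "'a \<Rightarrow>\<^sub>L real"
  assumes r: "0 < r" "ball x1 r \<subseteq> U"
    and D_scaleR: "\<And>c d. d \<in> D \<Longrightarrow> 0 \<le> c \<Longrightarrow> c *\<^sub>R d \<in> D \<and> \<sigma> (c *\<^sub>R d) = c * \<sigma> d"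
    and x1: "x1 - xh \<in> D"
  shows "\<exists>e\<in>cone_from U xh. d + e \<in> D \<and> \<sigma> (d + e) - blinfun_apply v e
    \<le> (2 * \<bar>\<sigma> (x1 - xh) - blinfun_apply v (x1 - xh)\<bar> / r + norm v) * norm d"
proof (cases "d = 0")
  case True
  have "0 \<in> cone_from U xh"
    using r unfolding cone_from_def by (intro CollectI exI[of _ 0] exI[of _ x1]) auto
  moreover have "0 \<in> D" "\<sigma> 0 = 0"
    using D_scaleR[OF x1, of 0] by simp_all
  ultimately show ?thesis
    using True by (intro bexI[of _ 0]) simp_all
next
  case False
  define t where "t = 2 * norm d / r"
  define C1 where "C1 = \<sigma> (x1 - xh) - blinfun_apply v (x1 - xh)"
  define e where "e = t *\<^sub>R ((x1 - inverse t *\<^sub>R d) - xh)"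
  have t: "0 < t"
    using False r by (simp add: t_def)
  have "norm (inverse t *\<^sub>R d) < r"
    using False r by (simp add: t_def)
  then have "x1 - inverse t *\<^sub>R d \<in> U"
    using r by (auto simp: dist_norm)
  then have "e \<in> cone_from U xh"
    unfolding cone_from_def e_def using t by (intro CollectI exI conjI) auto
  moreover have de: "d + e = t *\<^sub>R (x1 - xh)"
    using t by (simp add: e_def algebra_simps)
  then have "d + e \<in> D" "\<sigma> (d + e) = t * \<sigma> (x1 - xh)"
    using D_scaleR[OF x1, of t] t by simp_all
  moreover have "blinfun_apply v e = t * blinfun_apply v (x1 - xh) - blinfun_apply v d"
    using de by (metis add_diff_cancel_left' blinfun.diff_right blinfun.scaleR_right real_scaleR_def)
  moreover have "t * C1 + blinfun_apply v d \<le> t * \<bar>C1\<bar> + norm v * norm d"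
    using norm_blinfun[of v d] t by (intro add_mono) auto
  moreover have "t * \<bar>C1\<bar> + norm v * norm d = (2 * \<bar>C1\<bar> / r + norm v) * norm d"
    using r by (simp add: t_def field_simps)
  ultimately show ?thesis
    by (intro bexI[of _ e]) (simp_all add: C1_def algebra_simps)
qed

lemma support_fun_dominates_on_cone:
  fixes f :: "'a::banach \<Rightarrow> ereal"
  defines "S \<equiv> \<Union>x\<in>interior (edom f). subdiff f x"
  assumes pr: "proper_fun f" and cv: "convex_fun f" and lsc: "lsc_fun f"
    and S_sub: "S \<subseteq> subdiff f xh" and v: "v \<in> subdiff f xh"
    and d: "d \<in> cone_from (interior (edom f)) xh"
  shows "d \<in> support_dom S \<and> blinfun_apply v d \<le> support_fun S d"
proof -
  obtain t y where d: "d = t *\<^sub>R (y - xh)" "0 \<le> t" "y \<in> interior (edom f)"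
    using d unfolding cone_from_def by blast
  obtain e where fxh: "f xh = ereal e" and v_sub: "\<And>y. ereal (e + blinfun_apply v (y - xh)) \<le> f y"
    using subdiffE[OF v] by blast
  obtain wy where wy: "wy \<in> subdiff f y"
    using interior_edom_subdiff_nonempty[OF pr cv lsc d(3)] by blast
  then have "wy \<in> S"
    using d(3) unfolding S_def by blast
  then have S_ne: "S \<noteq> {}"
    by blast
  obtain b where fy: "f y = ereal b" and "ereal (b + blinfun_apply wy (xh - y)) \<le> f xh"
    using subdiffE[OF wy] by metis
  then have "b - e \<le> blinfun_apply wy (y - xh)"
    using fxh by (simp add: blinfun.diff_right)
  moreover have "blinfun_apply w (y - xh) \<le> b - e" if "w \<in> S" for w
  proof -
    have "ereal (e + blinfun_apply w (y - xh)) \<le> f y"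
      using subdiffE[of w f xh] that S_sub fxh by (metis ereal.inject subsetD)
    with fy show ?thesis
      by simp
  qed
  then have "y - xh \<in> support_dom S"
    using support_fun_least[OF S_ne] by blast
  moreover have "blinfun_apply v (y - xh) \<le> b - e"
    using v_sub[of y] fy by simp
  ultimately have "blinfun_apply v (y - xh) \<le> support_fun S (y - xh)"
    using support_fun_upper[of "y - xh" S wy] \<open>wy \<in> S\<close> by linarith
  with \<open>y - xh \<in> support_dom S\<close> show ?thesis
    using support_fun_scaleR[OF S_ne _ d(2)] d(1,2)
    by (simp add: blinfun.scaleR_right mult_left_mono)
qed

text \<open>The decomposition is a sandwich argument: the support function \<open>\<sigma>\<close> of the interior
  subgradients dominates \<open>v\<close> on the cone spanned by \<open>int (dom f) - xh\<close>, so a functional \<open>a\<close>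
  between them exists; \<open>a \<le> \<sigma>\<close> puts \<open>a\<close> in their weak-star closed convex hull, and
  \<open>v \<le> a\<close> on the cone makes \<open>v - a\<close> normal to \<open>dom f\<close> at \<open>xh\<close>.\<close>

lemma subdiff_decomposition:
  fixes f :: "'a::banach \<Rightarrow> ereal"
  defines "S \<equiv> \<Union>x\<in>interior (edom f). subdiff f x"
  assumes pr: "proper_fun f" and cv: "convex_fun f" and lsc: "lsc_fun f"
    and int: "interior (edom f) \<noteq> {}"
    and S_sub: "S \<subseteq> subdiff f xh" and v: "v \<in> subdiff f xh"
  shows "\<exists>a b. a \<in> weak_star_closed_convex_hull S \<and> b \<in> normal_cone (edom f) xh \<and> v = a + b"
proof -
  define U where "U = interior (edom f)"
  obtain x1 where x1: "x1 \<in> U"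
    using int by (auto simp: U_def)
  then obtain r where r: "0 < r" "ball x1 r \<subseteq> U"
    using open_interior open_contains_ball unfolding U_def by blast
  have S_ne: "S \<noteq> {}"
    using interior_edom_subdiff_nonempty[OF pr cv lsc] x1 unfolding S_def U_def by blast
  have P_below: "d \<in> support_dom S \<and> blinfun_apply v d \<le> support_fun S d"
    if "d \<in> cone_from U xh" for d
    unfolding S_def
    by (rule support_fun_dominates_on_cone[OF pr cv lsc S_sub[unfolded S_def] v that[unfolded U_def]])
  have "x1 - xh \<in> cone_from U xh"
    unfolding cone_from_def using x1 by (intro CollectI exI[of _ 1] exI[of _ x1]) simp
  then have "x1 - xh \<in> support_dom S"
    using P_below by blast
  moreover have "convex U"
    unfolding U_def using convex_edom[OF pr cv] by (rule convex_interior)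
  ultimately obtain a where a: "\<forall>d\<in>support_dom S. blinfun_apply a d \<le> support_fun S d"
    "\<forall>d\<in>cone_from U xh. blinfun_apply v d \<le> blinfun_apply a d"
    using hahn_banach_sandwich[OF support_fun_add[OF S_ne] support_fun_scaleR[OF S_ne]
        cone_from_add cone_from_scaleR P_below cone_from_absorbing[OF r support_fun_scaleR[OF S_ne]]]
    by blast
  have "a \<in> weak_star_closed_convex_hull S"
    using S_ne a(1) by (intro mem_weak_star_closed_convex_hull) (auto simp: support_dom_def support_fun_def)
  moreover have "v - a \<in> normal_cone (edom f) xh"
  proof (rule normal_cone_if_interior[OF convex_edom[OF pr cv] int])
    obtain e where "f xh = ereal e"
      using subdiffE[OF v] by blast
    then show "xh \<in> edom f"
      by (simp add: edom_def)
    fix y assume "y \<in> interior (edom f)"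
    then have "y - xh \<in> cone_from U xh"
      unfolding cone_from_def U_def by (intro CollectI exI[of _ 1] exI[of _ y]) simp
    with a(2) show "blinfun_apply (v - a) (y - xh) \<le> 0"
      by (simp add: blinfun.diff_left)
  qed
  ultimately show ?thesis
    by (intro exI[of _ a] exI[of _ "v - a"]) simp
qed

lemma subdiff_eq_hull_plus_normal_cone:
  fixes f :: "'a::banach \<Rightarrow> ereal"
  defines "S \<equiv> \<Union>x\<in>interior (edom f). subdiff f x"
  assumes pr: "proper_fun f" and cv: "convex_fun f" and lsc: "lsc_fun f"
    and int: "interior (edom f) \<noteq> {}" and S_sub: "S \<subseteq> subdiff f xh"
  shows "subdiff f xh = {a + b | a b. a \<in> weak_star_closed_convex_hull S \<and> b \<in> normal_cone (edom f) xh}"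
proof (intro equalityI subsetI)
  fix v assume "v \<in> subdiff f xh"
  then show "v \<in> {a + b | a b. a \<in> weak_star_closed_convex_hull S \<and> b \<in> normal_cone (edom f) xh}"
    using subdiff_decomposition[OF pr cv lsc int S_sub[unfolded S_def]] unfolding S_def by blast
next
  fix v assume "v \<in> {a + b | a b. a \<in> weak_star_closed_convex_hull S \<and> b \<in> normal_cone (edom f) xh}"
  then obtain a b where "v = a + b" "a \<in> weak_star_closed_convex_hull S" "b \<in> normal_cone (edom f) xh"
    by blast
  with weak_star_closed_convex_hull_subset_subdiff[OF S_sub] show "v \<in> subdiff f xh"
    using subdiff_add_normal_cone by blast
qed

lemma dom_Dconj_subset_subdiff_hull:
  assumes "lsc_fun f"
  shows "dom_Dconj f \<subseteq> (\<Union>xh\<in>closure (convex hull (im_Dconj f)). subdiff f xh)"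
proof
  fix u assume "u \<in> dom_Dconj f"
  then obtain z where D: "conj_frechet_deriv f u z"
    by (auto simp: dom_Dconj_def)
  then have "z \<in> closure (convex hull (im_Dconj f))"
    using hull_subset[of "im_Dconj f"] closure_subset unfolding im_Dconj_def by blast
  with conj_frechet_deriv_subdiff[OF assms D]
  show "u \<in> (\<Union>xh\<in>closure (convex hull (im_Dconj f)). subdiff f xh)"
    by blast
qed

theorem lemma4p5:
  fixes f :: "'a::banach \<Rightarrow> ereal"
  assumes "proper_fun f" and "convex_fun f" and "lsc_fun f"
    and "interior (edom f) \<noteq> {}"
    and "dom_Dconj f \<noteq> {}"
    and "\<And>x v. x \<in> edom f \<Longrightarrow> v \<in> edom (fconj f) \<Longrightarrow>
           fitzpatrick_subdiff f x v = f x + fconj f v"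
  shows "let K = closure (convex hull (im_Dconj f));
             V = weak_star_closed_convex_hull (\<Union>x\<in>interior (edom f). subdiff f x);
             N = (\<Union>xh\<in>K. normal_cone (edom f) xh);
             dK = (\<Union>xh\<in>K. subdiff f xh)
         in dom_Dconj f \<subseteq> dK \<and> dK = {a + b | a b. a \<in> V \<and> b \<in> N}
            \<and> {a + b | a b. a \<in> V \<and> b \<in> N} \<subseteq> edom (fconj f)"
proof -
  define K where "K = closure (convex hull (im_Dconj f))"
  define V where "V = weak_star_closed_convex_hull (\<Union>x\<in>interior (edom f). subdiff f x)"
  define N where "N = (\<Union>xh\<in>K. normal_cone (edom f) xh)"
  define dK where "dK = (\<Union>xh\<in>K. subdiff f xh)"
  have "subdiff f xh = {a + b | a b. a \<in> V \<and> b \<in> normal_cone (edom f) xh}" if "xh \<in> K" for xh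
    using subdiff_eq_hull_plus_normal_cone[OF assms(1-4)] that
      subdiff_interior_subset_subdiff_hull[OF assms(1-3,6)]
    unfolding V_def K_def by blast
  then have "dK = {a + b | a b. a \<in> V \<and> b \<in> N}"
    unfolding dK_def N_def by blast
  moreover have "dK \<subseteq> edom (fconj f)"
    using subdiff_subset_edom_fconj unfolding dK_def by blast
  ultimately show ?thesis
    using dom_Dconj_subset_subdiff_hull[OF assms(3)]
    unfolding Let_def K_def[symmetric] V_def[symmetric] N_def[symmetric] dK_def[symmetric]
    by simp
qed

end
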